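(* Fix $n\in\mathbb{N}$. For each $N \ge n$ let $(\nu_t^{(1:N)})_{t\ge1}$ be random vectors of non-negative integers with $\sum_i\nu_t^{(i)} = N$, such that for all sufficiently large $N$ and all $u\ge0$, $\tau_N(u)<\infty$ almost surely. Suppose there is a deterministic sequence $b_N\to0$ such that for all sufficiently large $N$, almost surely and uniformly in $t\ge1$, $$\frac{1}{(N)_3}\sum_{i=1}^N \mathbb{E}\big[(\nu_t^{(i)})_3 \,\big|\, \mathcal{F}_{t-1}\big] \leq b_N \frac{1}{(N)_2}\sum_{i=1}^N \mathbb{E}\big[(\nu_t^{(i)})_2 \,\big|\, \mathcal{F}_{t-1}\big].$$ Fix $k\in\mathbb{N}$, set $i_0 := 0$, $i_k := k$, and let $0 = t_0 \le t_1 \le\cdots\le t_k \le t$. Then $$\lim_{N\to\infty}\mathbb{E}\Bigg[\sum_{\substack{r_1<\cdots<r_k:\\ r_i\le\tau_N(t_i)\,\forall i}}\Bigg(\prod_{i=1}^k p_{r_i}\Bigg)\Bigg(\prod_{\substack{r=1\\ r\notin\{r_1,\dots,r_k\}}}^{\tau_N(t)}(1-p_r)\Bigg)\Bigg] \le \alpha_n^k e^{-\alpha_n t}\sum_{\substack{i_1\le\cdots\le i_{k-1}\in\{0,\dots,k\}:\\ i_j\ge j\ \forall j}}\prod_{j=1}^k\frac{(t_j-t_{j-1})^{i_j-i_{j-1}}}{(i_j-i_{j-1})!},$$ where $\alpha_n := n(n-1)/2$.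
   Context: $(x)_k$ is the falling factorial; $\mathcal{F}_t := \sigma(\nu_s^{(1:N)}: s\le t)$ ($\mathcal{F}_0$ trivial). $c_N(r) := \frac{1}{(N)_2}\sum_i(\nu_r^{(i)})_2$; $\tau_N(u) := \inf\{s\in\{0,1,\dots\}: \sum_{r=1}^s c_N(r)\ge u\}$. $p_r := 1 - \frac{1}{(N)_n}\sum_{i_1,\dots,i_n\text{ distinct}}\nu_r^{(i_1)}\cdots\nu_r^{(i_n)}$. The indices $r, r_i$ range over positive integers. *)

theory Defs
  imports "HOL-Probability.Probability"
begin

definition ff :: "nat \<Rightarrow> nat \<Rightarrow> real" where
  "ff x k = (\<Prod>j<k. (real x - real j))"

text \<open>Offspring numbers: nu N t i w is nu_t^{(i)} for population size N,
  generation t >= 1, individual i in {1..N}, outcome w.\<close>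

definition cN :: "(nat \<Rightarrow> nat \<Rightarrow> nat) \<Rightarrow> nat \<Rightarrow> nat \<Rightarrow> real" where
  "cN v N r = (1 / ff N 2) * (\<Sum>i=1..N. ff (v r i) 2)"

definition tauN :: "(nat \<Rightarrow> nat \<Rightarrow> nat) \<Rightarrow> nat \<Rightarrow> real \<Rightarrow> enat" where
  "tauN v N u = (if \<exists>s. u \<le> (\<Sum>r=1..s. cN v N r)
                 then enat (LEAST s. u \<le> (\<Sum>r=1..s. cN v N r)) else \<infinity>)"

definition pr :: "nat \<Rightarrow> (nat \<Rightarrow> nat \<Rightarrow> nat) \<Rightarrow> nat \<Rightarrow> nat \<Rightarrow> real" where
  "pr n v N r = 1 - (1 / ff N n) *
     (\<Sum>is\<in>{is. length is = n \<and> distinct is \<and> set is \<subseteq> {1..N}}.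
        (\<Prod>j<n. real (v r (is ! j))))"

text \<open>The natural filtration F_t = sigma(nu_s^{(1:N)} : s <= t); F_0 is trivial.\<close>
definition filt :: "'a measure \<Rightarrow> (nat \<Rightarrow> nat \<Rightarrow> 'a \<Rightarrow> nat) \<Rightarrow> nat \<Rightarrow> nat \<Rightarrow> 'a measure" where
  "filt M v N t = sigma (space M)
     {v s i -` A \<inter> space M | s i A. 1 \<le> s \<and> s \<le> t \<and> 1 \<le> i \<and> i \<le> N}"

text \<open>The random variable inside the expectation on the left-hand side.
  Index lists rs = [r_1,...,r_k] strictly increasing, with 1 <= r_j <= tau_N(t_j);
  tt j = t_j for j = 1..k and T = t.\<close>
definition lhs_rv :: "nat \<Rightarrow> (nat \<Rightarrow> nat \<Rightarrow> nat) \<Rightarrow> nat \<Rightarrow> nat \<Rightarrow> (nat \<Rightarrow> real) \<Rightarrow> real \<Rightarrow> real" where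
  "lhs_rv n v N k tt T =
     (\<Sum>rs\<in>{rs. length rs = k \<and> sorted_wrt (<) rs \<and>
               (\<forall>j<k. 1 \<le> rs ! j \<and> enat (rs ! j) \<le> tauN v N (tt (Suc j)))}.
        (\<Prod>j<k. pr n v N (rs ! j)) *
        (\<Prod>r\<in>{1..the_enat (tauN v N T)} - set rs. (1 - pr n v N r)))"

text \<open>Index sequences are functions nat => nat that vanish beyond k.\<close>
definition alpha :: "nat \<Rightarrow> real" where
  "alpha n = real n * (real n - 1) / 2"

definition rhs :: "nat \<Rightarrow> nat \<Rightarrow> (nat \<Rightarrow> real) \<Rightarrow> real \<Rightarrow> real" where
  "rhs n k tt T = alpha n ^ k * exp (- alpha n * T) *
     (\<Sum>ii\<in>{ii. ii 0 = 0 \<and> ii k = k \<and> (\<forall>j<k. ii j \<le> ii (Suc j)) \<and>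
               (\<forall>j\<le>k. j \<le> ii j) \<and> (\<forall>j>k. ii j = 0)}.
        (\<Prod>j=1..k. (tt j - tt (j - 1)) ^ (ii j - ii (j - 1)) / fact (ii j - ii (j - 1))))"

end

theory Submission
  imports Defs
begin

text \<open>Write \<open>c\<^sub>r = c\<^sub>N(r)\<close> and \<open>\<theta>\<^sub>r\<close> for the triple-merger rate of generation \<open>r\<close>.
  Expanding \<open>1 - p\<^sub>r\<close> as a sum over injective \<open>n\<close>-tuples of offspring numbers gives
  \<open>\<alpha>\<^sub>n c\<^sub>r - K (\<theta>\<^sub>r + c\<^sub>r\<^sup>2) \<le> p\<^sub>r \<le> \<alpha>\<^sub>n c\<^sub>r\<close>.
  Pathwise, the indices \<open>r\<^sub>1 < \<dots> < r\<^sub>k\<close> are grouped into the blocks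
  \<open>(\<tau>\<^sub>N(t\<^sub>j\<^sub>-\<^sub>1), \<tau>\<^sub>N(t\<^sub>j)]\<close>, on which the \<open>c\<^sub>r\<close> add up to \<open>t\<^sub>j - t\<^sub>j\<^sub>-\<^sub>1\<close> plus one overshoot;
  elementary symmetric sums are dominated by powers over factorials, and
  \<open>\<Prod>(1 - p\<^sub>r) \<le> exp (- \<Sum> p\<^sub>r) \<approx> exp (- \<alpha>\<^sub>n t)\<close> as long as the \<open>c\<^sub>r\<close> and \<open>\<Sum> \<theta>\<^sub>r\<close> are small.
  The conditional moment hypothesis turns into \<open>E[\<Sum>\<^sub>r\<^sub>\<le>\<^sub>\<tau> \<theta>\<^sub>r] \<le> b\<^sub>N (t + 1)\<close>, because the event
  \<open>r \<le> \<tau>\<^sub>N(t)\<close> is known at time \<open>r - 1\<close>; by Markov's inequality \<open>\<Sum> \<theta>\<^sub>r \<le> \<epsilon>\<^sup>2\<close> off an event of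
  vanishing probability, and there \<open>c\<^sub>r \<le> \<theta>\<^sub>r / \<epsilon> + \<epsilon> + 1/(N - 1) \<le> 2 \<epsilon> + o(1)\<close>.
  Letting \<open>N \<rightarrow> \<infinity>\<close> and then \<open>\<epsilon> \<rightarrow> 0\<close> gives the bound.\<close>

lemma ff_0 [simp]: "ff x 0 = 1"
  by (simp add: ff_def)

lemma ff_Suc: "ff x (Suc m) = ff x m * (real x - real m)"
  by (simp add: ff_def)

lemma ff_eq_0: "x < m \<Longrightarrow> ff x m = 0"
  unfolding ff_def by (rule prod_zero) auto

lemma ff_nonneg: "0 \<le> ff x m"
proof (cases "x < m")
  case True
  then show ?thesis by (simp add: ff_eq_0)
next
  case False
  then show ?thesis unfolding ff_def by (intro prod_nonneg) auto
qed

lemma ff_pos: "m \<le> x \<Longrightarrow> 0 < ff x m"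
  unfolding ff_def by (intro prod_pos) auto

lemma ff_mono: "x \<le> y \<Longrightarrow> ff x m \<le> ff y m"
proof (cases "x < m")
  case True
  then show ?thesis by (simp add: ff_eq_0 ff_nonneg)
next
  case False
  assume "x \<le> y"
  with False show ?thesis unfolding ff_def by (intro prod_mono) auto
qed

lemma ff_le_power: "ff x m \<le> real x ^ m"
proof (cases "x < m")
  case True
  then show ?thesis by (simp add: ff_eq_0)
next
  case False
  then have "ff x m \<le> (\<Prod>j<m. real x)" unfolding ff_def by (intro prod_mono) auto
  then show ?thesis by simp
qed

lemma ff_Suc_left: "1 \<le> x \<Longrightarrow> ff x (Suc m) = real x * ff (x - 1) m"
  unfolding ff_def
  by (simp del: prod.lessThan_Suc add: prod.lessThan_Suc_shift of_nat_diff algebra_simps)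

lemma ff_2: "ff x 2 = real x * (real x - 1)"
  by (simp add: ff_def numeral_2_eq_2)

lemma ff_3: "ff x 3 = ff x 2 * (real x - 2)"
  using ff_Suc[of x 2] by (simp add: numeral_3_eq_3)

lemma ff_add: "a \<le> x \<Longrightarrow> ff x (a + b) = ff x a * ff (x - a) b"
  by (induction b) (simp_all add: ff_Suc of_nat_diff algebra_simps)

lemma ff_diff_le: "x \<le> y \<Longrightarrow> ff y j - ff x j \<le> (real y - real x) * real j * real y ^ (j - 1)"
proof (induction j)
  case 0
  then show ?case by simp
next
  case (Suc j)
  show ?case
  proof (cases "y \<le> j")
    case True
    with Suc.prems have "ff y (Suc j) = 0" "ff x (Suc j) = 0" by (auto intro!: ff_eq_0)
    with Suc.prems show ?thesis by simp
  next
    case False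
    have split: "ff y (Suc j) - ff x (Suc j) = (ff y j - ff x j) * (real y - j) + ff x j * (real y - real x)"
      by (simp add: ff_Suc algebra_simps)
    have "(ff y j - ff x j) * (real y - j) \<le> ((real y - real x) * real j * real y ^ (j - 1)) * real y"
      using Suc False ff_mono[OF Suc.prems, of j] by (intro mult_mono) auto
    also have "\<dots> = (real y - real x) * real j * real y ^ j"
      by (cases j) (auto simp: algebra_simps)
    finally have "(ff y j - ff x j) * (real y - j) \<le> (real y - real x) * real j * real y ^ j" .
    moreover have "ff x j * (real y - real x) \<le> real y ^ j * (real y - real x)"
      using Suc.prems ff_le_power[of x j] power_mono[of "real x" "real y" j]
      by (intro mult_right_mono) auto
    ultimately show ?thesis using split by (simp add: algebra_simps)
  qed
qed

lemma power_le_2_power_ff: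
  assumes "2 * m \<le> x"
  shows "real x ^ m \<le> 2 ^ m * ff x m"
proof -
  have "(\<Prod>j<m. real x / 2) \<le> ff x m"
    unfolding ff_def using assms by (intro prod_mono) auto
  then show ?thesis by (simp add: power_divide field_simps)
qed

lemma alpha_Suc: "alpha (Suc m) = alpha m + real m"
  by (simp add: alpha_def field_simps)

lemma alpha_0 [simp]: "alpha 0 = 0"
  and alpha_1 [simp]: "alpha (Suc 0) = 0"
  by (simp_all add: alpha_def)

lemma alpha_nonneg: "0 \<le> alpha m"
  by (cases m) (auto simp: alpha_def)

definition distinct_lists :: "nat \<Rightarrow> 'a set \<Rightarrow> 'a list set" where
  "distinct_lists m I = {is. length is = m \<and> distinct is \<and> set is \<subseteq> I}"

lemma distinct_lists_Suc:
  "distinct_lists (Suc m) I = (\<lambda>(a, is). a # is) ` (SIGMA a:I. distinct_lists m (I - {a}))"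
proof (rule set_eqI)
  fix xs
  show "xs \<in> distinct_lists (Suc m) I \<longleftrightarrow> xs \<in> (\<lambda>(a, is). a # is) ` (SIGMA a:I. distinct_lists m (I - {a}))"
    by (cases xs) (auto simp: distinct_lists_def image_iff)
qed

lemma finite_distinct_lists: "finite I \<Longrightarrow> finite (distinct_lists m I)"
  by (rule finite_subset[OF _ finite_lists_length_eq[of I m]]) (auto simp: distinct_lists_def)

text \<open>The sum of \<open>w a\<^sub>1 \<cdots> w a\<^sub>m\<close> over all injective tuples in \<open>I\<close>, and the same sum
  weighted by \<open>w a\<^sub>1 + \<dots> + w a\<^sub>m\<close>.\<close>

fun distinct_prod_sum :: "('a \<Rightarrow> nat) \<Rightarrow> nat \<Rightarrow> 'a set \<Rightarrow> real" where
  "distinct_prod_sum w 0 I = 1"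
| "distinct_prod_sum w (Suc m) I = (\<Sum>a\<in>I. real (w a) * distinct_prod_sum w m (I - {a}))"

fun distinct_prod_weight_sum :: "('a \<Rightarrow> nat) \<Rightarrow> nat \<Rightarrow> 'a set \<Rightarrow> real" where
  "distinct_prod_weight_sum w 0 I = 0"
| "distinct_prod_weight_sum w (Suc m) I =
     (\<Sum>a\<in>I. real (w a) * (real (w a) * distinct_prod_sum w m (I - {a}) + distinct_prod_weight_sum w m (I - {a})))"

lemma sum_distinct_lists_prod:
  assumes "finite I"
  shows "(\<Sum>is\<in>distinct_lists m I. \<Prod>j<m. real (w (is ! j))) = distinct_prod_sum w m I"
  using assms
proof (induction m arbitrary: I)
  case 0
  have "distinct_lists 0 I = {[]}" by (auto simp: distinct_lists_def)
  then show ?case by simp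
next
  case (Suc m)
  have inj: "inj_on (\<lambda>(a, is). a # is) (SIGMA a:I. distinct_lists m (I - {a}))"
    by (auto simp: inj_on_def)
  have "(\<Sum>is\<in>distinct_lists (Suc m) I. \<Prod>j<Suc m. real (w (is ! j)))
      = (\<Sum>(a, is)\<in>(SIGMA a:I. distinct_lists m (I - {a})). real (w a) * (\<Prod>j<m. real (w (is ! j))))"
    unfolding distinct_lists_Suc
    by (subst sum.reindex[OF inj]) (simp add: case_prod_unfold prod.lessThan_Suc_shift del: prod.lessThan_Suc)
  also have "\<dots> = (\<Sum>a\<in>I. \<Sum>is\<in>distinct_lists m (I - {a}). real (w a) * (\<Prod>j<m. real (w (is ! j))))"
    by (rule sum.Sigma[symmetric]) (use Suc.prems in \<open>auto intro: finite_distinct_lists\<close>)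
  also have "\<dots> = distinct_prod_sum w (Suc m) I"
    using Suc by (simp add: sum_distrib_left[symmetric])
  finally show ?case .
qed

lemma distinct_prod_sum_Suc_eq:
  "finite I \<Longrightarrow> distinct_prod_sum w (Suc m) I
     = real (sum w I) * distinct_prod_sum w m I - distinct_prod_weight_sum w m I"
proof (induction m arbitrary: I)
  case 0
  then show ?case by (simp add: of_nat_sum)
next
  case (Suc m)
  have "distinct_prod_sum w (Suc (Suc m)) I
      = (\<Sum>a\<in>I. real (w a) * (real (sum w (I - {a})) * distinct_prod_sum w m (I - {a})
                                 - distinct_prod_weight_sum w m (I - {a})))"
    using Suc by (simp only: distinct_prod_sum.simps(2)) (intro sum.cong, auto)
  also have "\<dots> = (\<Sum>a\<in>I. real (sum w I) * (real (w a) * distinct_prod_sum w m (I - {a}))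
      - real (w a) * (real (w a) * distinct_prod_sum w m (I - {a}) + distinct_prod_weight_sum w m (I - {a})))"
  proof (intro sum.cong refl)
    fix a
    assume "a \<in> I"
    with Suc.prems have remove: "real (sum w (I - {a})) = real (sum w I) - real (w a)"
      by (simp add: of_nat_sum sum_diff1)
    show "real (w a) * (real (sum w (I - {a})) * distinct_prod_sum w m (I - {a}) - distinct_prod_weight_sum w m (I - {a}))
      = real (sum w I) * (real (w a) * distinct_prod_sum w m (I - {a}))
        - real (w a) * (real (w a) * distinct_prod_sum w m (I - {a}) + distinct_prod_weight_sum w m (I - {a}))"
      unfolding remove by (simp add: algebra_simps del: of_nat_sum)
  qed
  also have "\<dots> = real (sum w I) * distinct_prod_sum w (Suc m) I - distinct_prod_weight_sum w (Suc m) I"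
    by (simp only: distinct_prod_sum.simps(2) distinct_prod_weight_sum.simps(2) sum_subtractf sum_distrib_left)
  finally show ?case .
qed

lemma distinct_prod_weight_sum_eq:
  "finite I \<Longrightarrow> distinct_prod_weight_sum w (Suc m) I - real (Suc m) * distinct_prod_sum w (Suc m) I
     = real (Suc m) * (\<Sum>b\<in>I. ff (w b) 2 * distinct_prod_sum w m (I - {b}))"
proof (induction m arbitrary: I)
  case 0
  then show ?case by (simp add: ff_2 sum_subtractf[symmetric] algebra_simps)
next
  case (Suc m)
  let ?S = "distinct_prod_sum w" and ?U = "distinct_prod_weight_sum w"
  have "?U (Suc (Suc m)) I - real (Suc (Suc m)) * ?S (Suc (Suc m)) I
      = (\<Sum>a\<in>I. ff (w a) 2 * ?S (Suc m) (I - {a})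
                + real (w a) * (?U (Suc m) (I - {a}) - real (Suc m) * ?S (Suc m) (I - {a})))"
    by (simp only: distinct_prod_sum.simps(2)[of w "Suc m"] distinct_prod_weight_sum.simps(2)[of w "Suc m"]
          sum_distrib_left sum_subtractf[symmetric])
       (intro sum.cong refl, simp add: ff_2 algebra_simps)
  also have "\<dots> = (\<Sum>a\<in>I. ff (w a) 2 * ?S (Suc m) (I - {a}))
      + real (Suc m) * (\<Sum>a\<in>I. \<Sum>b\<in>I - {a}. real (w a) * (ff (w b) 2 * ?S m (I - {a} - {b})))"
    using Suc by (simp add: sum.distrib sum_distrib_left algebra_simps)
  also have "(\<Sum>a\<in>I. \<Sum>b\<in>I - {a}. real (w a) * (ff (w b) 2 * ?S m (I - {a} - {b})))
      = (\<Sum>b\<in>I. \<Sum>a\<in>{a\<in>I. b \<noteq> a}. real (w a) * (ff (w b) 2 * ?S m (I - {a} - {b})))"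
    unfolding set_diff_eq Diff_iff using Suc.prems by (subst sum.swap_restrict) (auto simp: conj_commute)
  also have "\<dots> = (\<Sum>b\<in>I. ff (w b) 2 * ?S (Suc m) (I - {b}))"
  proof (intro sum.cong refl)
    fix b
    have "{a\<in>I. b \<noteq> a} = I - {b}" by auto
    then show "(\<Sum>a\<in>{a\<in>I. b \<noteq> a}. real (w a) * (ff (w b) 2 * ?S m (I - {a} - {b})))
        = ff (w b) 2 * ?S (Suc m) (I - {b})"
      by (simp add: sum_distrib_left Diff_insert2[symmetric] insert_commute algebra_simps)
  qed
  finally show ?case by (simp add: algebra_simps)
qed

lemma distinct_prod_sum_nonneg: "0 \<le> distinct_prod_sum w m I"
  by (induction m arbitrary: I) (auto intro!: sum_nonneg)

lemma distinct_prod_sum_le_ff: "finite I \<Longrightarrow> distinct_prod_sum w m I \<le> ff (sum w I) m"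
proof (induction m arbitrary: I)
  case 0
  then show ?case by simp
next
  case (Suc m)
  have "distinct_prod_sum w (Suc m) I \<le> (\<Sum>a\<in>I. real (w a) * ff (sum w I - 1) m)"
    unfolding distinct_prod_sum.simps
  proof (intro sum_mono)
    fix a
    assume a: "a \<in> I"
    show "real (w a) * distinct_prod_sum w m (I - {a}) \<le> real (w a) * ff (sum w I - 1) m"
    proof (cases "w a = 0")
      case False
      with a Suc.prems have "sum w (I - {a}) \<le> sum w I - 1" by (simp add: sum_diff1_nat)
      then have "distinct_prod_sum w m (I - {a}) \<le> ff (sum w I - 1) m"
        using Suc.IH[of "I - {a}"] Suc.prems ff_mono by (meson finite_Diff order.trans)
      then show ?thesis by (intro mult_left_mono) auto
    qed simp
  qed
  also have "\<dots> \<le> ff (sum w I) (Suc m)"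
  proof (cases "sum w I = 0")
    case True
    with Suc.prems show ?thesis by (simp add: ff_nonneg)
  next
    case False
    then show ?thesis by (simp add: ff_Suc_left sum_distrib_right)
  qed
  finally show ?case .
qed

lemma ff_minus_distinct_prod_sum_Suc_Suc:
  "finite I \<Longrightarrow> ff (sum w I) (Suc (Suc m)) - distinct_prod_sum w (Suc (Suc m)) I
     = (real (sum w I) - real (Suc m)) * (ff (sum w I) (Suc m) - distinct_prod_sum w (Suc m) I)
       + real (Suc m) * (\<Sum>b\<in>I. ff (w b) 2 * distinct_prod_sum w m (I - {b}))"
  using distinct_prod_sum_Suc_eq[of I w "Suc m"] distinct_prod_weight_sum_eq[of I w m]
    ff_Suc[of "sum w I" "Suc m"]
  by (simp add: algebra_simps)

lemma alpha_ff_step: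
  assumes "m < W"
  shows "(real W - real (Suc m)) * (alpha (Suc m) * ff (W - 2) (m - 1)) = alpha (Suc m) * ff (W - 2) m"
proof (cases m)
  case (Suc m')
  with assms have "real (W - 2) - real m' = real W - real (Suc m)" by (simp add: of_nat_diff)
  with Suc show ?thesis by (simp add: ff_Suc)
qed simp

lemma sum_ff2_distinct_prod_sum_le:
  assumes "finite I"
  shows "(\<Sum>b\<in>I. ff (w b) 2 * distinct_prod_sum w m (I - {b})) \<le> (\<Sum>b\<in>I. ff (w b) 2) * ff (sum w I - 2) m"
  unfolding sum_distrib_right
proof (intro sum_mono)
  fix b
  assume b: "b \<in> I"
  show "ff (w b) 2 * distinct_prod_sum w m (I - {b}) \<le> ff (w b) 2 * ff (sum w I - 2) m"
  proof (cases "w b < 2")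
    case False
    with b assms have "sum w (I - {b}) \<le> sum w I - 2" by (simp add: sum_diff1_nat)
    then have "distinct_prod_sum w m (I - {b}) \<le> ff (sum w I - 2) m"
      using distinct_prod_sum_le_ff[of "I - {b}" w m] assms ff_mono by (meson finite_Diff order.trans)
    then show ?thesis by (intro mult_left_mono ff_nonneg)
  qed (simp add: ff_eq_0)
qed

lemma ff_minus_distinct_prod_sum_le:
  assumes "finite I"
  shows "ff (sum w I) m - distinct_prod_sum w m I
    \<le> alpha m * (\<Sum>b\<in>I. ff (w b) 2) * ff (sum w I - 2) (m - 2)"
proof -
  define W where "W = sum w I"
  define Q2 where "Q2 = (\<Sum>b\<in>I. ff (w b) 2)"
  have "ff W (Suc m) - distinct_prod_sum w (Suc m) I \<le> alpha (Suc m) * Q2 * ff (W - 2) (m - 1)" for m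
  proof (induction m)
    case 0
    with assms show ?case by (simp add: ff_Suc of_nat_sum W_def)
  next
    case (Suc m)
    show ?case
    proof (cases "W \<le> Suc m")
      case True
      then have "ff W (Suc (Suc m)) = 0" by (intro ff_eq_0) auto
      moreover have "0 \<le> alpha (Suc (Suc m)) * Q2 * ff (W - 2) m"
        unfolding Q2_def by (intro mult_nonneg_nonneg sum_nonneg alpha_nonneg ff_nonneg)
      ultimately show ?thesis using distinct_prod_sum_nonneg[of w "Suc (Suc m)" I] by simp
    next
      case False
      have "ff W (Suc (Suc m)) - distinct_prod_sum w (Suc (Suc m)) I
          = (real W - real (Suc m)) * (ff W (Suc m) - distinct_prod_sum w (Suc m) I)
            + real (Suc m) * (\<Sum>b\<in>I. ff (w b) 2 * distinct_prod_sum w m (I - {b}))"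
        using ff_minus_distinct_prod_sum_Suc_Suc[OF assms] unfolding W_def by simp
      also have "\<dots> \<le> (real W - real (Suc m)) * (alpha (Suc m) * Q2 * ff (W - 2) (m - 1))
                      + real (Suc m) * (Q2 * ff (W - 2) m)"
        using Suc.IH sum_ff2_distinct_prod_sum_le[OF assms] False
        unfolding W_def Q2_def by (intro add_mono mult_left_mono) (auto simp del: of_nat_sum)
      also have "\<dots> = alpha (Suc (Suc m)) * Q2 * ff (W - 2) m"
        using alpha_ff_step[of m W] False alpha_Suc[of "Suc m"] by (simp add: algebra_simps)
      finally show ?thesis by simp
    qed
  qed
  from this[of "m - 1"] show ?thesis
    unfolding W_def Q2_def by (cases m) simp_all
qed

fun kappa :: "nat \<Rightarrow> real" where
  "kappa 0 = 0"
| "kappa (Suc j) = kappa j + real j * (real j - 1) + real j * alpha (j - 1)"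

lemma kappa_nonneg: "0 \<le> kappa j"
proof (induction j)
  case (Suc j)
  have "0 \<le> real j * (real j - 1)" by (cases j) auto
  with Suc alpha_nonneg[of "j - 1"] show ?case by simp
qed simp

definition kappa_error :: "nat \<Rightarrow> real \<Rightarrow> real \<Rightarrow> real \<Rightarrow> real" where
  "kappa_error m W R3 Q2 = kappa m * (R3 * W ^ m / W ^ 3 + Q2\<^sup>2 * W ^ m / W ^ 4)"

lemma kappa_error_nonneg: "0 < W \<Longrightarrow> 0 \<le> R3 \<Longrightarrow> 0 \<le> kappa_error m W R3 Q2"
  unfolding kappa_error_def by (intro mult_nonneg_nonneg add_nonneg_nonneg kappa_nonneg) auto

lemma kappa_error_Suc_Suc:
  assumes W: "0 < W" and R3: "0 \<le> R3"
  shows "W * kappa_error (Suc m) W R3 Q2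
           + real (Suc m) * (R3 * (real m * W ^ (m - 1)) + Q2\<^sup>2 * (alpha m * W ^ (m - 2)))
         \<le> kappa_error (Suc (Suc m)) W R3 Q2"
proof -
  define X3 where "X3 = W ^ Suc (Suc m) / W ^ 3"
  define X4 where "X4 = W ^ Suc (Suc m) / W ^ 4"
  have "real m * W ^ (m - 1) = real m * X3"
  proof (cases m)
    case (Suc m')
    then have "W ^ Suc (Suc m) = W ^ (m - 1) * W ^ 3"
      by (simp add: power_add[symmetric] eval_nat_numeral)
    with W show ?thesis unfolding X3_def by simp
  qed simp
  moreover have "alpha m * W ^ (m - 2) = alpha m * X4"
  proof (cases "2 \<le> m")
    case True
    then have "W ^ Suc (Suc m) = W ^ (m - 2) * W ^ 4"
      by (simp add: power_add[symmetric])
    with W show ?thesis unfolding X4_def by simp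
  next
    case False
    then have "m = 0 \<or> m = 1" by auto
    then show ?thesis by auto
  qed
  moreover have "W * kappa_error (Suc m) W R3 Q2 = kappa (Suc m) * (R3 * X3 + Q2\<^sup>2 * X4)"
    unfolding kappa_error_def X3_def X4_def using W by (simp add: field_simps)
  moreover have "kappa_error (Suc (Suc m)) W R3 Q2 = kappa (Suc (Suc m)) * (R3 * X3 + Q2\<^sup>2 * X4)"
    unfolding kappa_error_def X3_def X4_def by (simp add: algebra_simps)
  moreover have "0 \<le> real (Suc m) * real m * (Q2\<^sup>2 * X4) + real (Suc m) * alpha m * (R3 * X3)"
    unfolding X3_def X4_def using W R3 alpha_nonneg[of m]
    by (intro add_nonneg_nonneg mult_nonneg_nonneg) auto
  ultimately show ?thesis
    by (simp only: kappa.simps(2)[of "Suc m"]) (simp add: algebra_simps)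
qed

lemma ff2_distinct_prod_sum_remove_ge:
  assumes fin: "finite I" and b: "b \<in> I"
  shows "ff (w b) 2 * distinct_prod_sum w m (I - {b}) \<ge> ff (w b) 2 * ff (sum w I - 2) m
      - ff (w b) 3 * (real m * real (sum w I) ^ (m - 1))
      - ff (w b) 2 * (alpha m * (\<Sum>c\<in>I. ff (w c) 2) * real (sum w I) ^ (m - 2))"
proof (cases "w b < 2")
  case True
  then have "ff (w b) 2 = 0" "ff (w b) 3 = 0" by (auto intro!: ff_eq_0)
  then show ?thesis by simp
next
  case False
  define W where "W = sum w I"
  define Wb where "Wb = sum w (I - {b})"
  define Q2 where "Q2 = (\<Sum>c\<in>I. ff (w c) 2)"
  have Wb: "Wb = W - w b" using b fin by (simp add: sum_diff1_nat W_def Wb_def)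
  have "w b \<le> W" unfolding W_def using b fin by (metis member_le_sum zero_le)
  with Wb False have Wb_le: "Wb \<le> W - 2" and Wb_diff: "real (W - 2) - real Wb = real (w b) - 2"
    by (auto simp: of_nat_diff)
  have "ff Wb m - distinct_prod_sum w m (I - {b})
      \<le> alpha m * (\<Sum>c\<in>I - {b}. ff (w c) 2) * ff (Wb - 2) (m - 2)"
    using ff_minus_distinct_prod_sum_le[of "I - {b}" w m] fin unfolding Wb_def by simp
  also have "\<dots> \<le> alpha m * Q2 * real W ^ (m - 2)"
  proof (intro mult_mono mult_left_mono alpha_nonneg)
    show "(\<Sum>c\<in>I - {b}. ff (w c) 2) \<le> Q2"
      unfolding Q2_def using fin by (intro sum_mono2) (auto intro: ff_nonneg)
    have "ff (Wb - 2) (m - 2) \<le> real (Wb - 2) ^ (m - 2)" by (rule ff_le_power)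
    also have "\<dots> \<le> real W ^ (m - 2)" using Wb by (intro power_mono) auto
    finally show "ff (Wb - 2) (m - 2) \<le> real W ^ (m - 2)" .
  qed (auto intro!: ff_nonneg sum_nonneg mult_nonneg_nonneg alpha_nonneg simp: Q2_def)
  finally have low1: "distinct_prod_sum w m (I - {b}) \<ge> ff Wb m - alpha m * Q2 * real W ^ (m - 2)"
    by simp
  have "ff (W - 2) m - ff Wb m \<le> (real (W - 2) - real Wb) * real m * real (W - 2) ^ (m - 1)"
    by (rule ff_diff_le[OF Wb_le])
  also have "\<dots> \<le> (real (w b) - 2) * real m * real W ^ (m - 1)"
    unfolding Wb_diff using False by (intro mult_left_mono power_mono) auto
  finally have "distinct_prod_sum w m (I - {b})
      \<ge> ff (W - 2) m - (real (w b) - 2) * real m * real W ^ (m - 1) - alpha m * Q2 * real W ^ (m - 2)"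
    using low1 by simp
  then have "ff (w b) 2 * distinct_prod_sum w m (I - {b}) \<ge> ff (w b) 2 *
      (ff (W - 2) m - (real (w b) - 2) * real m * real W ^ (m - 1) - alpha m * Q2 * real W ^ (m - 2))"
    by (intro mult_left_mono ff_nonneg)
  then show ?thesis unfolding W_def[symmetric] Q2_def[symmetric] ff_3 by (simp add: algebra_simps)
qed

lemma sum_ff2_distinct_prod_sum_ge:
  assumes "finite I"
  shows "(\<Sum>b\<in>I. ff (w b) 2 * distinct_prod_sum w m (I - {b}))
    \<ge> (\<Sum>b\<in>I. ff (w b) 2) * ff (sum w I - 2) m
      - (\<Sum>b\<in>I. ff (w b) 3) * (real m * real (sum w I) ^ (m - 1))
      - (\<Sum>b\<in>I. ff (w b) 2)\<^sup>2 * (alpha m * real (sum w I) ^ (m - 2))"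
proof -
  have "(\<Sum>b\<in>I. ff (w b) 2) * ff (sum w I - 2) m
      - (\<Sum>b\<in>I. ff (w b) 3) * (real m * real (sum w I) ^ (m - 1))
      - (\<Sum>b\<in>I. ff (w b) 2) * (alpha m * (\<Sum>c\<in>I. ff (w c) 2) * real (sum w I) ^ (m - 2))
    = (\<Sum>b\<in>I. ff (w b) 2 * ff (sum w I - 2) m - ff (w b) 3 * (real m * real (sum w I) ^ (m - 1))
           - ff (w b) 2 * (alpha m * (\<Sum>c\<in>I. ff (w c) 2) * real (sum w I) ^ (m - 2)))"
    by (simp only: sum_subtractf sum_distrib_right)
  also have "\<dots> \<le> (\<Sum>b\<in>I. ff (w b) 2 * distinct_prod_sum w m (I - {b}))"
    by (intro sum_mono ff2_distinct_prod_sum_remove_ge[OF assms])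
  finally show ?thesis by (simp add: power2_eq_square algebra_simps)
qed

lemma ff_minus_distinct_prod_sum_Suc_Suc_ge:
  fixes w :: "'a \<Rightarrow> nat" and I :: "'a set"
  defines "Q2 \<equiv> (\<Sum>b\<in>I. ff (w b) 2)" and "R3 \<equiv> (\<Sum>b\<in>I. ff (w b) 3)"
  assumes fin: "finite I" and m: "m < sum w I"
    and IH: "ff (sum w I) (Suc m) - distinct_prod_sum w (Suc m) I
      \<ge> alpha (Suc m) * Q2 * ff (sum w I - 2) (m - 1) - kappa_error (Suc m) (sum w I) R3 Q2"
  shows "ff (sum w I) (Suc (Suc m)) - distinct_prod_sum w (Suc (Suc m)) I
      \<ge> alpha (Suc (Suc m)) * Q2 * ff (sum w I - 2) m - kappa_error (Suc (Suc m)) (sum w I) R3 Q2"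
proof -
  define W where "W = sum w I"
  define E where "E j = kappa_error j (real W) R3 Q2" for j
  have W: "0 < real W" using m unfolding W_def by (simp del: of_nat_sum)
  have R3: "0 \<le> R3" unfolding R3_def by (intro sum_nonneg ff_nonneg)
  have "ff W (Suc (Suc m)) - distinct_prod_sum w (Suc (Suc m)) I
      = (real W - real (Suc m)) * (ff W (Suc m) - distinct_prod_sum w (Suc m) I)
        + real (Suc m) * (\<Sum>b\<in>I. ff (w b) 2 * distinct_prod_sum w m (I - {b}))"
    using ff_minus_distinct_prod_sum_Suc_Suc[OF fin] unfolding W_def by simp
  also have "\<dots> \<ge> (real W - real (Suc m)) * (alpha (Suc m) * Q2 * ff (W - 2) (m - 1) - E (Suc m))
       + real (Suc m) * (Q2 * ff (W - 2) m - R3 * (real m * real W ^ (m - 1))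
                         - Q2\<^sup>2 * (alpha m * real W ^ (m - 2)))"
    using IH sum_ff2_distinct_prod_sum_ge[OF fin, of w m] m
    unfolding W_def E_def Q2_def R3_def by (intro add_mono mult_left_mono) (auto simp del: of_nat_sum)
  finally have "ff W (Suc (Suc m)) - distinct_prod_sum w (Suc (Suc m)) I
      \<ge> alpha (Suc (Suc m)) * Q2 * ff (W - 2) m - (real W - real (Suc m)) * E (Suc m)
        - real (Suc m) * (R3 * (real m * real W ^ (m - 1)) + Q2\<^sup>2 * (alpha m * real W ^ (m - 2)))"
    using alpha_ff_step[of m W] m alpha_Suc[of "Suc m"] unfolding W_def by (simp add: algebra_simps)
  moreover have "(real W - real (Suc m)) * E (Suc m) \<le> real W * E (Suc m)"
    using kappa_error_nonneg[OF W R3] unfolding E_def by (intro mult_right_mono) auto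
  ultimately show ?thesis
    using kappa_error_Suc_Suc[OF W R3, of m Q2] unfolding E_def W_def by simp
qed

lemma ff_minus_distinct_prod_sum_ge:
  fixes w :: "'a \<Rightarrow> nat" and I :: "'a set"
  defines "Q2 \<equiv> (\<Sum>b\<in>I. ff (w b) 2)" and "R3 \<equiv> (\<Sum>b\<in>I. ff (w b) 3)"
  assumes fin: "finite I" and W_pos: "0 < sum w I"
  shows "ff (sum w I) m - distinct_prod_sum w m I
    \<ge> alpha m * Q2 * ff (sum w I - 2) (m - 2) - kappa_error m (sum w I) R3 Q2"
proof -
  have "ff (sum w I) (Suc m) - distinct_prod_sum w (Suc m) I
      \<ge> alpha (Suc m) * Q2 * ff (sum w I - 2) (m - 1) - kappa_error (Suc m) (sum w I) R3 Q2" for m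
  proof (induction m)
    case 0
    with fin show ?case by (simp add: ff_Suc of_nat_sum kappa_error_def)
  next
    case (Suc m)
    show ?case
    proof (cases "sum w I \<le> m")
      case True
      with W_pos have "ff (sum w I - 2) m = 0" "ff (sum w I) (Suc (Suc m)) = 0"
        by (auto intro!: ff_eq_0)
      moreover have "distinct_prod_sum w (Suc (Suc m)) I \<le> 0"
        using distinct_prod_sum_le_ff[OF fin, of w "Suc (Suc m)"] calculation by simp
      moreover have "0 \<le> kappa_error (Suc (Suc m)) (sum w I) R3 Q2"
        using W_pos unfolding R3_def by (intro kappa_error_nonneg sum_nonneg ff_nonneg) (auto simp del: of_nat_sum)
      ultimately show ?thesis by (simp del: distinct_prod_sum.simps)
    next
      case False
      then have "m < sum w I" by simp
      from ff_minus_distinct_prod_sum_Suc_Suc_ge[OF fin this] Suc.IH show ?thesis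
        unfolding Q2_def R3_def by simp
    qed
  qed
  from this[of "m - 1"] show ?thesis
    by (cases m) (simp_all add: kappa_error_def)
qed

definition theta3 :: "(nat \<Rightarrow> nat \<Rightarrow> nat) \<Rightarrow> nat \<Rightarrow> nat \<Rightarrow> real" where
  "theta3 v N r = (1 / ff N 3) * (\<Sum>i=1..N. ff (v r i) 3)"

lemma cN_nonneg: "0 \<le> cN v N r"
  unfolding cN_def by (intro mult_nonneg_nonneg sum_nonneg ff_nonneg) (auto intro: ff_nonneg)

lemma theta3_nonneg: "0 \<le> theta3 v N r"
  unfolding theta3_def by (intro mult_nonneg_nonneg sum_nonneg ff_nonneg) (auto intro: ff_nonneg)

lemma le_of_sum_eq: "sum w {1..N} = (N::nat) \<Longrightarrow> i \<in> {1..N} \<Longrightarrow> w i \<le> N"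
  by (metis finite_atLeastAtMost member_le_sum zero_le)

lemma cN_le_1:
  assumes tot: "sum (v r) {1..N} = N" and N: "2 \<le> N"
  shows "cN v N r \<le> 1"
proof -
  have "(\<Sum>i=1..N. ff (v r i) 2) \<le> (\<Sum>i=1..N. real (v r i) * (real N - 1))"
    unfolding ff_2 using le_of_sum_eq[OF tot] by (intro sum_mono mult_left_mono) auto
  also have "\<dots> = ff N 2"
    using tot by (simp add: ff_2 sum_distrib_right[symmetric] del: of_nat_sum) (metis of_nat_sum)
  finally show ?thesis unfolding cN_def using ff_pos[OF N] by (simp add: field_simps)
qed

text \<open>Individuals with \<open>\<nu> - 2 \<ge> \<epsilon> (N - 2)\<close> are charged to the triple rate; each of the
  others contributes at most \<open>\<epsilon> + 1/(N - 1)\<close> per offspring.\<close>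

lemma cN_le_theta3:
  assumes tot: "sum (v r) {1..N} = N" and N: "3 \<le> N" and eps: "0 < \<epsilon>"
  shows "cN v N r \<le> theta3 v N r / \<epsilon> + \<epsilon> + 1 / (real N - 1)"
proof -
  have f2: "0 < ff N 2" and f3: "0 < ff N 3" using N by (auto intro!: ff_pos)
  have each: "ff x 2 / ff N 2 \<le> ff x 3 / (ff N 3 * \<epsilon>) + real x / real N * (\<epsilon> + 1 / (real N - 1))"
    for x :: nat
  proof (cases "real x - 2 \<ge> \<epsilon> * (real N - 2)")
    case True
    have "ff N 2 * (ff x 2 * (\<epsilon> * (real N - 2))) \<le> ff N 2 * ff x 3"
      unfolding ff_3 using True f2 by (intro mult_left_mono ff_nonneg) auto
    then have "ff x 2 / ff N 2 \<le> ff x 3 / (ff N 3 * \<epsilon>)"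
      using f2 eps N unfolding ff_3[of N] by (simp add: field_simps)
    moreover have "0 \<le> real x / real N * (\<epsilon> + 1 / (real N - 1))" using N eps by simp
    ultimately show ?thesis by simp
  next
    case False
    have "ff x 2 \<le> real x * (\<epsilon> * (real N - 2) + 1)"
      unfolding ff_2 using False by (cases "x = 0") (auto intro: mult_left_mono)
    then have "ff x 2 / ff N 2 \<le> real x / real N * ((\<epsilon> * (real N - 2) + 1) / (real N - 1))"
      using f2 by (simp add: ff_2 divide_right_mono)
    also have "\<dots> \<le> real x / real N * (\<epsilon> + 1 / (real N - 1))"
      using N eps by (intro mult_left_mono) (auto simp: field_simps)
    finally show ?thesis using f3 eps by (simp add: ff_nonneg add_increasing)
  qed
  have "cN v N r = (\<Sum>i=1..N. ff (v r i) 2 / ff N 2)"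
    unfolding cN_def by (simp add: sum_divide_distrib)
  also have "\<dots> \<le> (\<Sum>i=1..N. ff (v r i) 3 / (ff N 3 * \<epsilon>) + real (v r i) / real N * (\<epsilon> + 1 / (real N - 1)))"
    by (intro sum_mono each)
  also have "\<dots> = theta3 v N r / \<epsilon> + (\<Sum>i=1..N. real (v r i)) / real N * (\<epsilon> + 1 / (real N - 1))"
    unfolding theta3_def sum.distrib by (simp add: sum_divide_distrib sum_distrib_right)
  also have "(\<Sum>i=1..N. real (v r i)) = real N"
    using tot by (metis of_nat_sum)
  finally show ?thesis using N by simp
qed

lemma pr_eq_distinct_prod_sum:
  "pr n v N r = 1 - distinct_prod_sum (v r) n {1..N} / ff N n"
  unfolding pr_def sum_distinct_lists_prod[OF finite_atLeastAtMost, symmetric] distinct_lists_def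
  by simp

lemma pr_nonneg:
  assumes "sum (v r) {1..N} = N" "n \<le> N"
  shows "0 \<le> pr n v N r"
  using distinct_prod_sum_le_ff[of "{1..N}" "v r" n] ff_pos[of n N] assms
  by (simp add: pr_eq_distinct_prod_sum)

lemma pr_le_1:
  assumes "n \<le> N"
  shows "pr n v N r \<le> 1"
  using distinct_prod_sum_nonneg[of "v r" n "{1..N}"] ff_pos[OF assms]
  by (simp add: pr_eq_distinct_prod_sum)

lemma pr_eq_ff_minus_distinct_prod_sum:
  assumes "n \<le> N"
  shows "pr n v N r = (ff N n - distinct_prod_sum (v r) n {1..N}) / ff N n"
  using ff_pos[OF assms] by (simp add: pr_eq_distinct_prod_sum field_simps)

lemma alpha_cN_eq:
  assumes "n \<le> N"
  shows "alpha n * (\<Sum>i=1..N. ff (v r i) 2) * ff (N - 2) (n - 2) / ff N n = alpha n * cN v N r"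
proof (cases "n < 2")
  case True
  then have "alpha n = 0" by (cases n) (auto simp: alpha_def)
  then show ?thesis by simp
next
  case False
  then have "2 + (n - 2) = n" by simp
  with False assms have "ff N n = ff N 2 * ff (N - 2) (n - 2)"
    using ff_add[of 2 N "n - 2"] by simp
  moreover have "0 < ff (N - 2) (n - 2)" using assms False by (intro ff_pos) auto
  ultimately show ?thesis unfolding cN_def by simp
qed

lemma pr_le_alpha_cN:
  assumes "sum (v r) {1..N} = N" "n \<le> N"
  shows "pr n v N r \<le> alpha n * cN v N r"
  using ff_minus_distinct_prod_sum_le[of "{1..N}" "v r" n] ff_pos[OF assms(2)] assms
  unfolding pr_eq_ff_minus_distinct_prod_sum[OF assms(2)] alpha_cN_eq[OF assms(2), symmetric]
  by (simp add: divide_right_mono)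

lemma kappa_error_div_ff_le:
  assumes N: "2 * n \<le> N" "4 \<le> N"
  shows "kappa_error n N (\<Sum>i=1..N. ff (v r i) 3) (\<Sum>i=1..N. ff (v r i) 2) / ff N n
    \<le> kappa n * 2 ^ n * (theta3 v N r + (cN v N r)\<^sup>2)"
proof -
  define Q2 where "Q2 = (\<Sum>i=1..N. ff (v r i) 2)"
  define R3 where "R3 = (\<Sum>i=1..N. ff (v r i) 3)"
  have Np: "0 < real N" and fn: "0 < ff N n" and f2: "0 < ff N 2" and f3: "0 < ff N 3"
    using N by (auto intro!: ff_pos)
  have "R3 / real N ^ 3 \<le> R3 / ff N 3"
    using ff_le_power[of N 3] f3 Np unfolding R3_def by (intro divide_left_mono sum_nonneg ff_nonneg) auto
  then have r1: "R3 / real N ^ 3 \<le> theta3 v N r" unfolding theta3_def R3_def by simp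
  have "(ff N 2)\<^sup>2 \<le> (real N ^ 2)\<^sup>2" using f2 ff_le_power[of N 2] by (intro power_mono) auto
  then have "Q2\<^sup>2 / real N ^ 4 \<le> Q2\<^sup>2 / (ff N 2)\<^sup>2"
    using f2 Np by (intro divide_left_mono) (auto simp: power_mult[symmetric])
  then have r2: "Q2\<^sup>2 / real N ^ 4 \<le> (cN v N r)\<^sup>2" unfolding cN_def Q2_def by (simp add: power_divide)
  have "real N ^ n / ff N n \<le> 2 ^ n" using power_le_2_power_ff[OF N(1)] fn by (simp add: field_simps)
  then have "kappa_error n N R3 Q2 / ff N n = kappa n * (R3 / real N ^ 3 + Q2\<^sup>2 / real N ^ 4) * (real N ^ n / ff N n)"
    unfolding kappa_error_def by (simp add: field_simps)
  also have "\<dots> \<le> kappa n * (theta3 v N r + (cN v N r)\<^sup>2) * 2 ^ n"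
    using r1 r2 \<open>real N ^ n / ff N n \<le> 2 ^ n\<close> kappa_nonneg[of n] theta3_nonneg[of v N r] Np fn
      sum_nonneg[of "{1..N}" "\<lambda>i. ff (v r i) 3", OF ff_nonneg]
    by (intro mult_mono mult_left_mono add_mono) (auto simp: R3_def)
  finally show ?thesis unfolding Q2_def R3_def by (simp add: algebra_simps)
qed

lemma alpha_cN_le_pr:
  assumes tot: "sum (v r) {1..N} = N" and N: "2 * n \<le> N" "4 \<le> N"
  shows "alpha n * cN v N r - kappa n * 2 ^ n * (theta3 v N r + (cN v N r)\<^sup>2) \<le> pr n v N r"
proof -
  have nN: "n \<le> N" and fn: "0 < ff N n" using N by (auto intro!: ff_pos)
  have "alpha n * (\<Sum>i=1..N. ff (v r i) 2) * ff (N - 2) (n - 2)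
      - kappa_error n N (\<Sum>i=1..N. ff (v r i) 3) (\<Sum>i=1..N. ff (v r i) 2)
      \<le> ff N n - distinct_prod_sum (v r) n {1..N}"
    using ff_minus_distinct_prod_sum_ge[of "{1..N}" "v r" n] tot N by (simp del: of_nat_sum)
  then have "alpha n * cN v N r
      - kappa_error n N (\<Sum>i=1..N. ff (v r i) 3) (\<Sum>i=1..N. ff (v r i) 2) / ff N n \<le> pr n v N r"
    unfolding pr_eq_ff_minus_distinct_prod_sum[OF nN] alpha_cN_eq[OF nN, symmetric] diff_divide_distrib[symmetric]
    using fn by (simp add: divide_right_mono)
  with kappa_error_div_ff_le[OF N, of v r] show ?thesis by simp
qed

definition elem_sym :: "('a \<Rightarrow> real) \<Rightarrow> nat \<Rightarrow> 'a set \<Rightarrow> real" where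
  "elem_sym c m B = (\<Sum>S | S \<subseteq> B \<and> card S = m. \<Prod>x\<in>S. c x)"

lemma finite_card_subsets: "finite B \<Longrightarrow> finite {S. S \<subseteq> B \<and> card S = m}"
  by (rule finite_subset[of _ "Pow B"]) auto

lemma elem_sym_0: "finite B \<Longrightarrow> elem_sym c 0 B = 1"
proof -
  assume "finite B"
  then have "{S. S \<subseteq> B \<and> card S = 0} = {{}}" using finite_subset by fastforce
  then show ?thesis unfolding elem_sym_def by simp
qed

lemma elem_sym_Suc_empty: "elem_sym c (Suc m) {} = 0"
  unfolding elem_sym_def by simp

lemma elem_sym_Suc_insert:
  assumes fin: "finite B" and b: "b \<notin> B"
  shows "elem_sym c (Suc m) (insert b B) = elem_sym c (Suc m) B + c b * elem_sym c m B"
proof -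
  let ?P = "\<lambda>m. {S. S \<subseteq> B \<and> card S = m}"
  have split: "{S. S \<subseteq> insert b B \<and> card S = Suc m} = ?P (Suc m) \<union> insert b ` ?P m"
  proof (intro equalityI subsetI)
    fix S
    assume S: "S \<in> {S. S \<subseteq> insert b B \<and> card S = Suc m}"
    then have "finite S" using fin by (auto intro: finite_subset)
    with S show "S \<in> ?P (Suc m) \<union> insert b ` ?P m"
      by (cases "b \<in> S") (auto intro!: image_eqI[of S "insert b" "S - {b}"])
  next
    fix S
    assume "S \<in> ?P (Suc m) \<union> insert b ` ?P m"
    then consider "S \<in> ?P (Suc m)" | T where "T \<in> ?P m" "S = insert b T" by blast
    then show "S \<in> {S. S \<subseteq> insert b B \<and> card S = Suc m}"
    proof cases
      case (2 T)
      with fin b have "finite T" "b \<notin> T" using finite_subset by blast+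
      with 2 show ?thesis by simp blast
    qed blast
  qed
  have inj: "inj_on (insert b) (?P m)"
  proof (rule inj_onI)
    fix S T
    assume "S \<in> ?P m" "T \<in> ?P m" "insert b S = insert b T"
    moreover from b this(1,2) have "b \<notin> S" "b \<notin> T" by auto
    ultimately show "S = T" by (simp add: insert_ident)
  qed
  have "elem_sym c (Suc m) (insert b B) = elem_sym c (Suc m) B + (\<Sum>S\<in>insert b ` ?P m. \<Prod>x\<in>S. c x)"
    unfolding elem_sym_def split
    by (rule sum.union_disjoint) (use b finite_card_subsets[OF fin] in auto)
  also have "(\<Sum>S\<in>insert b ` ?P m. \<Prod>x\<in>S. c x) = (\<Sum>S\<in>?P m. c b * (\<Prod>x\<in>S. c x))"
  proof (subst sum.reindex[OF inj], intro sum.cong refl)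
    fix S
    assume "S \<in> ?P m"
    with fin b have "finite S" "b \<notin> S" using finite_subset by blast+
    then show "((\<lambda>S. \<Prod>x\<in>S. c x) \<circ> insert b) S = c b * (\<Prod>x\<in>S. c x)" by simp
  qed
  finally show ?thesis unfolding elem_sym_def sum_distrib_left by simp
qed

lemma elem_sym_nonneg: "(\<And>x. x \<in> B \<Longrightarrow> 0 \<le> c x) \<Longrightarrow> 0 \<le> elem_sym c m B"
  unfolding elem_sym_def by (intro sum_nonneg prod_nonneg) auto

lemma power_Suc_add_ge:
  fixes p q :: real
  assumes "0 \<le> p" "0 \<le> q"
  shows "p ^ Suc m + real (Suc m) * q * p ^ m \<le> (p + q) ^ Suc m"
proof (induction m)
  case (Suc m)
  have "p ^ Suc (Suc m) + real (Suc (Suc m)) * q * p ^ Suc m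
      \<le> (p + q) * (p ^ Suc m + real (Suc m) * q * p ^ m)"
    using assms by (simp add: algebra_simps)
  also have "\<dots> \<le> (p + q) * (p + q) ^ Suc m"
    using Suc assms by (intro mult_left_mono) auto
  finally show ?case by simp
qed simp

lemma elem_sym_le_power:
  assumes "finite B" "\<And>x. x \<in> B \<Longrightarrow> 0 \<le> c x"
  shows "elem_sym c m B \<le> (sum c B) ^ m / fact m"
  using assms
proof (induction B arbitrary: m rule: finite_induct)
  case empty
  then show ?case by (cases m) (auto simp: elem_sym_0 elem_sym_Suc_empty)
next
  case (insert b B)
  show ?case
  proof (cases m)
    case 0
    with insert show ?thesis by (simp add: elem_sym_0)
  next
    case (Suc m')
    have cb: "0 \<le> c b" and sB: "0 \<le> sum c B" using insert.prems by (auto intro: sum_nonneg)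
    have "elem_sym c m (insert b B) = elem_sym c (Suc m') B + c b * elem_sym c m' B"
      using Suc insert by (simp add: elem_sym_Suc_insert)
    also have "\<dots> \<le> (sum c B) ^ Suc m' / fact (Suc m') + c b * ((sum c B) ^ m' / fact m')"
      using insert.prems cb by (intro add_mono mult_left_mono insert.IH) auto
    also have "\<dots> = ((sum c B) ^ Suc m' + real (Suc m') * c b * (sum c B) ^ m') / fact (Suc m')"
      unfolding add_divide_distrib fact_Suc[of m'] by simp
    also have "\<dots> \<le> (sum c B + c b) ^ Suc m' / fact (Suc m')"
      by (intro divide_right_mono power_Suc_add_ge sB cb) auto
    finally show ?thesis using Suc insert by (simp add: add.commute)
  qed
qed

lemma mono_upto:
  fixes f :: "nat \<Rightarrow> 'a :: preorder"
  assumes "\<And>j. j < k \<Longrightarrow> f j \<le> f (Suc j)"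
  shows "i \<le> j \<Longrightarrow> j \<le> k \<Longrightarrow> f i \<le> f j"
proof (induction j)
  case (Suc j)
  then show ?case using assms[of j] by (cases "i = Suc j") (auto intro: order_trans)
qed simp

definition index_paths :: "nat \<Rightarrow> (nat \<Rightarrow> nat) set" where
  "index_paths k = {ii. ii 0 = 0 \<and> ii k = k \<and> (\<forall>j<k. ii j \<le> ii (Suc j)) \<and>
                       (\<forall>j\<le>k. j \<le> ii j) \<and> (\<forall>j>k. ii j = 0)}"

lemma finite_index_paths: "finite (index_paths k)"
proof (rule finite_imageD)
  show "inj_on (\<lambda>ii. restrict ii {..k}) (index_paths k)"
  proof (rule inj_onI, rule ext)
    fix x y j
    assume "x \<in> index_paths k" "y \<in> index_paths k" "restrict x {..k} = restrict y {..k}"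
    then show "x j = y j"
      unfolding index_paths_def by (cases "j \<le> k") (metis atMost_iff restrict_apply', auto)
  qed
  have "ii j \<le> k" if "ii \<in> index_paths k" "j \<le> k" for ii j
    using mono_upto[of k ii j k] that unfolding index_paths_def by auto
  then have "(\<lambda>ii. restrict ii {..k}) ` index_paths k \<subseteq> PiE {..k} (\<lambda>_. {..k})"
    by (auto simp: PiE_iff split: if_split_asm)
  then show "finite ((\<lambda>ii. restrict ii {..k}) ` index_paths k)"
    by (rule finite_subset) (simp add: finite_PiE)
qed

definition bounded_increasing_lists :: "nat \<Rightarrow> (nat \<Rightarrow> nat) \<Rightarrow> nat list set" where
  "bounded_increasing_lists k L =
     {rs. length rs = k \<and> sorted_wrt (<) rs \<and> (\<forall>j<k. 1 \<le> rs ! j \<and> rs ! j \<le> L (Suc j))}"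

lemma bounded_increasing_listsD:
  assumes rs: "rs \<in> bounded_increasing_lists k L" and L: "\<And>j. j < k \<Longrightarrow> L j \<le> L (Suc j)"
  shows "distinct rs" "sorted rs" "length rs = k" "set rs \<subseteq> {1..L k}"
proof -
  show "distinct rs" "sorted rs" "length rs = k"
    using rs unfolding bounded_increasing_lists_def by (auto simp: strict_sorted_iff)
  show "set rs \<subseteq> {1..L k}"
  proof
    fix x
    assume "x \<in> set rs"
    then obtain j where j: "j < length rs" "x = rs ! j" by (auto simp: in_set_conv_nth)
    with rs have "1 \<le> x" "x \<le> L (Suc j)" "Suc j \<le> k" unfolding bounded_increasing_lists_def by auto
    with mono_upto[of k L "Suc j" k, OF L] show "x \<in> {1..L k}" by auto
  qed
qed

lemma card_Int_atMost_split:
  fixes a b :: "'a :: linorder"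
  assumes "finite A" "a \<le> b"
  shows "card (A \<inter> {..b}) = card (A \<inter> {..a}) + card (A \<inter> {a<..b})"
proof -
  from assms(2) have "A \<inter> {..b} = (A \<inter> {..a}) \<union> (A \<inter> {a<..b})" by auto
  with assms(1) show ?thesis by (simp only:) (rule card_Un_disjoint, auto)
qed

locale block_partition =
  fixes k :: nat and L :: "nat \<Rightarrow> nat"
  assumes L_0: "L 0 = 0" and L_mono: "\<And>j. j < k \<Longrightarrow> L j \<le> L (Suc j)"
begin

definition block :: "nat \<Rightarrow> nat set" where
  "block j = {L (j - 1)<..L j}"

definition prefix_count :: "nat list \<Rightarrow> nat \<Rightarrow> nat" where
  "prefix_count rs j = (if j \<le> k then card (set rs \<inter> {..L j}) else 0)"

lemma L_le: "i \<le> j \<Longrightarrow> j \<le> k \<Longrightarrow> L i \<le> L j"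
  using mono_upto[of k L, OF L_mono] .

lemma finite_block: "finite (block j)"
  unfolding block_def by simp

lemma UN_block: "(\<Union>j\<in>{1..k}. block j) = {1..L k}"
  using L_mono
proof (induction k)
  case (Suc k)
  have "{1..Suc k} = insert (Suc k) {1..k}" by auto
  moreover have "(\<Union>j\<in>{1..k}. {L (j - 1)<..L j}) = {1..L k}" using Suc by (simp add: block_def)
  moreover have "L k \<le> L (Suc k)" using Suc.prems by simp
  ultimately show ?case by (auto simp: block_def)
qed (simp add: block_def L_0)

lemma block_disjoint:
  assumes "i \<in> {1..k}" "j \<in> {1..k}" "i \<noteq> j"
  shows "block i \<inter> block j = {}"
proof -
  have "block i \<inter> block j = {}" if "i < j" "j \<le> k" for i j
  proof -
    from that have "L i \<le> L (j - 1)" by (intro L_le) auto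
    then show ?thesis by (auto simp: block_def)
  qed
  with assms show ?thesis
    by (cases "i < j") (simp, metis Int_commute atLeastAtMost_iff linorder_neqE_nat)
qed

lemma set_eq_UN_block:
  "rs \<in> bounded_increasing_lists k L \<Longrightarrow> set rs = (\<Union>j\<in>{1..k}. set rs \<inter> block j)"
  using bounded_increasing_listsD(4)[of rs k L, OF _ L_mono] UN_block by blast

lemma prefix_count_in_index_paths:
  assumes rs: "rs \<in> bounded_increasing_lists k L"
  shows "prefix_count rs \<in> index_paths k"
proof -
  note rsD = bounded_increasing_listsD[OF rs L_mono]
  have "set rs \<inter> {..L 0} = {}" using rsD(4) L_0 by auto
  moreover have "set rs \<inter> {..L k} = set rs" using rsD(4) by auto
  moreover have "card (set rs \<inter> {..L j}) \<le> card (set rs \<inter> {..L (Suc j)})" if "j < k" for j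
    using L_mono[OF that] by (intro card_mono) auto
  moreover have "j \<le> card (set rs \<inter> {..L j})" if "j \<le> k" for j
  proof (cases j)
    case (Suc j')
    have "(nth rs) ` {..<j} \<subseteq> set rs \<inter> {..L j}"
    proof
      fix x
      assume "x \<in> (nth rs) ` {..<j}"
      then obtain i where i: "i < j" "x = rs ! i" by auto
      have "rs ! i \<le> rs ! j'" using i Suc rsD that by (intro sorted_nth_mono) auto
      also have "rs ! j' \<le> L j" using rs Suc that unfolding bounded_increasing_lists_def by auto
      finally show "x \<in> set rs \<inter> {..L j}" using i rsD that by auto
    qed
    moreover have "card ((nth rs) ` {..<j}) = j"
      using rsD that by (subst card_image) (auto intro!: inj_on_nth)
    ultimately show ?thesis by (metis card_mono finite_Int List.finite_set)
  qed simp
  ultimately show ?thesis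
    unfolding index_paths_def prefix_count_def using rsD by (auto simp: distinct_card)
qed

lemma card_Int_block:
  "j \<in> {1..k} \<Longrightarrow> card (set rs \<inter> block j) = prefix_count rs j - prefix_count rs (j - 1)"
  using card_Int_atMost_split[of "set rs" "L (j - 1)" "L j"] L_le[of "j - 1" j]
  unfolding prefix_count_def block_def by auto

lemma inj_on_Int_block:
  "inj_on (\<lambda>rs. restrict (\<lambda>j. set rs \<inter> block j) {1..k}) (bounded_increasing_lists k L)"
proof (rule inj_onI)
  fix xs ys
  assume xs: "xs \<in> bounded_increasing_lists k L" and ys: "ys \<in> bounded_increasing_lists k L"
    and eq: "restrict (\<lambda>j. set xs \<inter> block j) {1..k} = restrict (\<lambda>j. set ys \<inter> block j) {1..k}"
  have "set xs \<inter> block j = set ys \<inter> block j" if "j \<in> {1..k}" for j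
    using fun_cong[OF eq, of j] that by simp
  then have "set xs = set ys" using set_eq_UN_block[OF xs] set_eq_UN_block[OF ys] by auto
  then show "xs = ys"
    using bounded_increasing_listsD[OF xs L_mono] bounded_increasing_listsD[OF ys L_mono]
    by (intro sorted_distinct_set_unique) auto
qed

lemma prod_nth_eq_prod_block:
  assumes rs: "rs \<in> bounded_increasing_lists k L"
  shows "(\<Prod>j<k. c (rs ! j)) = (\<Prod>j\<in>{1..k}. \<Prod>x\<in>set rs \<inter> block j. c x)"
proof -
  note rsD = bounded_increasing_listsD[OF rs L_mono]
  have "(nth rs) ` {..<k} = set rs" using rsD(3) by (auto simp: in_set_conv_nth)
  then have "(\<Prod>j<k. c (rs ! j)) = (\<Prod>x\<in>set rs. c x)"
    using rsD by (metis inj_on_nth lessThan_iff prod.reindex_cong)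
  also have "\<dots> = (\<Prod>j\<in>{1..k}. \<Prod>x\<in>set rs \<inter> block j. c x)"
    by (subst set_eq_UN_block[OF rs], rule prod.UNION_disjoint) (use block_disjoint in blast)+
  finally show ?thesis .
qed

text \<open>A list is determined by its intersections with the blocks; the block sizes are the
  increments of an index path, and the sum over block subsets of prescribed sizes is a
  product of elementary symmetric sums.\<close>

lemma sum_bounded_increasing_lists_le:
  fixes c :: "nat \<Rightarrow> real"
  assumes c: "\<And>r. 0 \<le> c r"
  shows "(\<Sum>rs\<in>bounded_increasing_lists k L. \<Prod>j<k. c (rs ! j))
     \<le> (\<Sum>ii\<in>index_paths k. \<Prod>j=1..k. (sum c (block j)) ^ (ii j - ii (j - 1)) / fact (ii j - ii (j - 1)))"
proof -
  define f where "f rs = (prefix_count rs, restrict (\<lambda>j. set rs \<inter> block j) {1..k})" for rs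
  define F where "F ii j = {S. S \<subseteq> block j \<and> card S = ii j - ii (j - 1)}" for ii :: "nat \<Rightarrow> nat" and j
  define g where "g = (\<lambda>(ii :: nat \<Rightarrow> nat, S :: nat \<Rightarrow> nat set). \<Prod>j\<in>{1..k}. \<Prod>x\<in>S j. c x)"
  have fin_F: "finite (F ii j)" for ii j
    unfolding F_def by (rule finite_subset[of _ "Pow (block j)"]) (auto simp: finite_block)
  have sub: "f ` bounded_increasing_lists k L \<subseteq> (SIGMA ii:index_paths k. PiE {1..k} (F ii))"
    using prefix_count_in_index_paths card_Int_block unfolding f_def F_def by (auto simp: block_def)
  have inj: "inj_on f (bounded_increasing_lists k L)"
    using inj_on_Int_block unfolding f_def inj_on_def by simp
  have "(\<Sum>rs\<in>bounded_increasing_lists k L. \<Prod>j<k. c (rs ! j)) = (\<Sum>rs\<in>bounded_increasing_lists k L. g (f rs))"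
    using prod_nth_eq_prod_block unfolding g_def f_def by (intro sum.cong) auto
  also have "\<dots> = (\<Sum>y\<in>f ` bounded_increasing_lists k L. g y)"
    using inj by (simp add: sum.reindex)
  also have "\<dots> \<le> (\<Sum>y\<in>(SIGMA ii:index_paths k. PiE {1..k} (F ii)). g y)"
    using sub by (intro sum_mono2 finite_SigmaI finite_index_paths finite_PiE fin_F)
      (auto simp: g_def intro!: prod_nonneg c)
  also have "\<dots> = (\<Sum>ii\<in>index_paths k. \<Prod>j\<in>{1..k}. elem_sym c (ii j - ii (j - 1)) (block j))"
    unfolding g_def elem_sym_def F_def
    by (subst sum.Sigma[symmetric]) (auto simp: finite_index_paths finite_PiE fin_F[unfolded F_def]
          prod_sum_PiE finite_block intro!: sum.cong finite_subset[of _ "Pow _"])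
  also have "\<dots> \<le> (\<Sum>ii\<in>index_paths k. \<Prod>j=1..k. (sum c (block j)) ^ (ii j - ii (j - 1)) / fact (ii j - ii (j - 1)))"
    by (intro sum_mono prod_mono conjI elem_sym_nonneg elem_sym_le_power) (auto simp: c finite_block)
  finally show ?thesis .
qed

end

definition cN_sum :: "(nat \<Rightarrow> nat \<Rightarrow> nat) \<Rightarrow> nat \<Rightarrow> nat \<Rightarrow> real" where
  "cN_sum v N s = (\<Sum>r=1..s. cN v N r)"

lemma cN_sum_Suc: "cN_sum v N (Suc s) = cN_sum v N s + cN v N (Suc s)"
  unfolding cN_sum_def by simp

lemma tauN_eq: "tauN v N u = (if \<exists>s. u \<le> cN_sum v N s then enat (LEAST s. u \<le> cN_sum v N s) else \<infinity>)"
  unfolding tauN_def cN_sum_def ..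

lemma enat_le_tauN_iff: "enat r \<le> tauN v N u \<longleftrightarrow> (\<forall>s<r. cN_sum v N s < u)"
proof (cases "\<exists>s. u \<le> cN_sum v N s")
  case True
  then have tau: "tauN v N u = enat (LEAST s. u \<le> cN_sum v N s)" unfolding tauN_eq by simp
  show ?thesis
  proof
    assume "enat r \<le> tauN v N u"
    then show "\<forall>s<r. cN_sum v N s < u"
      unfolding tau using not_less_Least by (metis enat_ord_simps(1) leI order.strict_trans2)
  next
    assume "\<forall>s<r. cN_sum v N s < u"
    moreover have "u \<le> cN_sum v N (LEAST s. u \<le> cN_sum v N s)" using True by (rule LeastI_ex)
    ultimately show "enat r \<le> tauN v N u" unfolding tau by (meson enat_ord_simps(1) not_le)
  qed
next
  case False
  then have "tauN v N u = \<infinity>" unfolding tauN_eq by simp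
  with False show ?thesis by (auto simp: not_le)
qed

lemma le_cN_sum_tauN: "tauN v N u = enat L \<Longrightarrow> u \<le> cN_sum v N L"
  unfolding tauN_eq by (auto split: if_splits intro: LeastI_ex)

lemma tauN_mono:
  assumes "u \<le> u'"
  shows "tauN v N u \<le> tauN v N u'"
proof (cases "tauN v N u'")
  case (enat L)
  with assms have "u \<le> cN_sum v N L" using le_cN_sum_tauN by fastforce
  with enat show ?thesis unfolding tauN_eq[of v N u] by (auto intro: Least_le)
qed simp

lemma tauN_0: "tauN v N 0 = enat 0"
proof -
  have "0 \<le> cN_sum v N 0" by (simp add: cN_sum_def)
  moreover from this have "(LEAST s. 0 \<le> cN_sum v N s) = 0" by (rule Least_eq_0)
  ultimately show ?thesis unfolding tauN_eq by auto
qed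

lemma cN_sum_tauN_le:
  assumes tau: "tauN v N u = enat L" and cN_le: "\<And>r. r \<in> {1..L} \<Longrightarrow> cN v N r \<le> m"
    and "0 \<le> u" "0 \<le> m"
  shows "cN_sum v N L \<le> u + m"
proof (cases L)
  case (Suc L')
  have "cN_sum v N L' < u" using tau enat_le_tauN_iff[of L v N u] Suc by auto
  with cN_le[of L] Suc show ?thesis by (simp add: cN_sum_Suc)
qed (use assms in \<open>simp add: cN_sum_def\<close>)

lemma cN_sum_le_of_enat_le_tauN:
  assumes "enat s \<le> tauN v N u" "\<And>r. 1 \<le> r \<Longrightarrow> cN v N r \<le> 1" "0 \<le> u"
  shows "cN_sum v N s \<le> u + 1"
proof (cases s)
  case (Suc s')
  have "cN_sum v N s' < u" using assms(1) unfolding enat_le_tauN_iff Suc by auto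
  with assms(2)[of s] Suc show ?thesis by (simp add: cN_sum_Suc)
qed (use assms in \<open>simp add: cN_sum_def\<close>)

text \<open>The sum in \<^const>\<open>rhs\<close>, with every increment \<open>t\<^sub>j - t\<^sub>j\<^sub>-\<^sub>1\<close> enlarged by the
  overshoot \<open>m\<close> of \<open>c\<^sub>N\<close> at \<open>\<tau>\<^sub>N\<close>.\<close>

definition path_sum :: "nat \<Rightarrow> (nat \<Rightarrow> real) \<Rightarrow> real \<Rightarrow> real" where
  "path_sum k tt m = (\<Sum>ii\<in>index_paths k.
     \<Prod>j=1..k. (tt j - tt (j - 1) + m) ^ (ii j - ii (j - 1)) / fact (ii j - ii (j - 1)))"

lemma rhs_eq_path_sum: "rhs n k tt T = alpha n ^ k * exp (- alpha n * T) * path_sum k tt 0"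
  unfolding rhs_def path_sum_def index_paths_def by simp

lemma path_sum_nonneg:
  assumes "\<And>j. j < k \<Longrightarrow> tt j \<le> tt (Suc j)" "0 \<le> m"
  shows "0 \<le> path_sum k tt m"
proof -
  have "tt (j - 1) \<le> tt j" if "j \<in> {1..k}" for j
  proof -
    from that have "j - 1 < k" "Suc (j - 1) = j" by auto
    with assms(1) show ?thesis by metis
  qed
  then show ?thesis unfolding path_sum_def using assms(2)
    by (intro sum_nonneg prod_nonneg divide_nonneg_pos zero_le_power add_nonneg_nonneg) auto
qed

lemma tendsto_path_sum: "(g \<longlongrightarrow> l) F \<Longrightarrow> ((\<lambda>x. path_sum k tt (g x)) \<longlongrightarrow> path_sum k tt l) F"
  unfolding path_sum_def by (intro tendsto_intros) auto

lemma prod_one_minus_le_exp: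
  fixes p c \<theta> :: "nat \<Rightarrow> real"
  assumes fin: "finite R" and A: "A \<subseteq> R" "card A = k"
    and p: "\<And>r. r \<in> R \<Longrightarrow> p r \<le> 1 \<and> a * c r - K * (\<theta> r + (c r)\<^sup>2) \<le> p r"
    and c: "\<And>r. r \<in> R \<Longrightarrow> 0 \<le> c r \<and> c r \<le> m" and \<theta>: "\<And>r. r \<in> R \<Longrightarrow> 0 \<le> \<theta> r"
    and sum_\<theta>: "sum \<theta> R \<le> \<eta>" and sum_c: "T \<le> sum c R" "sum c R \<le> T + m"
    and a: "0 \<le> a" and K: "0 \<le> K" and m: "0 \<le> m"
  shows "(\<Prod>r\<in>R - A. 1 - p r) \<le> exp (- a * T) * exp (a * real k * m + K * (\<eta> + m * (T + m)))"
proof -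
  have "sum c A \<le> real k * m"
    using sum_bounded_above[of A c m] c A by (auto simp: subsetD)
  then have lower: "a * (T - real k * m) \<le> a * sum c (R - A)"
    using sum_c A fin a by (intro mult_left_mono) (auto simp: sum_diff finite_subset)
  have "sum (\<lambda>r. \<theta> r + (c r)\<^sup>2) (R - A) \<le> sum (\<lambda>r. \<theta> r + (c r)\<^sup>2) R"
    using fin \<theta> by (intro sum_mono2) auto
  also have "\<dots> \<le> sum (\<lambda>r. \<theta> r + m * c r) R"
    using c by (intro sum_mono add_left_mono) (auto simp: power2_eq_square mult_right_mono)
  also have "\<dots> \<le> \<eta> + m * (T + m)"
    using sum_\<theta> sum_c m by (simp add: sum.distrib sum_distrib_left[symmetric] mult_left_mono add_mono)
  finally have "K * sum (\<lambda>r. \<theta> r + (c r)\<^sup>2) (R - A) \<le> K * (\<eta> + m * (T + m))"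
    using K by (intro mult_left_mono)
  moreover have "a * sum c (R - A) - K * sum (\<lambda>r. \<theta> r + (c r)\<^sup>2) (R - A) \<le> sum p (R - A)"
    unfolding sum_distrib_left sum_subtractf[symmetric] using p by (intro sum_mono) auto
  ultimately have exponent: "- sum p (R - A) \<le> - a * T + (a * real k * m + K * (\<eta> + m * (T + m)))"
    using lower by (simp add: right_diff_distrib)
  have "(\<Prod>r\<in>R - A. 1 - p r) \<le> (\<Prod>r\<in>R - A. exp (- p r))"
    using p by (intro prod_mono) (auto simp: exp_ge_add_one_self[of "- p _", simplified])
  also have "\<dots> = exp (\<Sum>r\<in>R - A. - p r)"
    using fin by (simp add: exp_sum)
  also have "\<dots> \<le> exp (- a * T + (a * real k * m + K * (\<eta> + m * (T + m))))"
    using exponent by (simp add: sum_negf)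
  also have "\<dots> = exp (- a * T) * exp (a * real k * m + K * (\<eta> + m * (T + m)))"
    by (rule exp_add)
  finally show ?thesis .
qed

locale pathwise_bound =
  fixes n N k L :: nat and v :: "nat \<Rightarrow> nat \<Rightarrow> nat" and tt :: "nat \<Rightarrow> real" and T m :: real
  assumes total: "\<And>t. 1 \<le> t \<Longrightarrow> sum (v t) {1..N} = N"
    and N: "2 * n \<le> N" "4 \<le> N"
    and t0: "tt 0 = 0" and tmono: "\<And>j. j < k \<Longrightarrow> tt j \<le> tt (Suc j)" and tT: "tt k \<le> T"
    and tau: "tauN v N T = enat L"
    and m_nonneg: "0 \<le> m" and cN_le: "\<And>r. r \<in> {1..L} \<Longrightarrow> cN v N r \<le> m"
begin

definition tau_t :: "nat \<Rightarrow> nat" where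
  "tau_t j = the_enat (tauN v N (tt j))"

lemma tt_nonneg: "j \<le> k \<Longrightarrow> 0 \<le> tt j"
  using mono_upto[of k tt 0 j, OF tmono] t0 by simp

lemma tt_le_T: "j \<le> k \<Longrightarrow> tt j \<le> T"
  using mono_upto[of k tt j k, OF tmono] tT by simp

lemma T_nonneg: "0 \<le> T"
  using tt_nonneg[of k] tT by simp

lemma tauN_tt: "j \<le> k \<Longrightarrow> tauN v N (tt j) = enat (tau_t j) \<and> tau_t j \<le> L"
  using tauN_mono[OF tt_le_T, of j v N] tau unfolding tau_t_def by (cases "tauN v N (tt j)") auto

lemma tau_t_0: "tau_t 0 = 0"
  unfolding tau_t_def t0 tauN_0 by simp

lemma tau_t_mono: "j < k \<Longrightarrow> tau_t j \<le> tau_t (Suc j)"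
  using tauN_mono[OF tmono, of j v N] tauN_tt[of j] tauN_tt[of "Suc j"] by simp

lemma bounded_increasing_lists_tau_t:
  assumes "rs \<in> bounded_increasing_lists k tau_t"
  shows "set rs \<subseteq> {1..L}" "card (set rs) = k" "\<And>j. j < k \<Longrightarrow> 1 \<le> rs ! j"
  using bounded_increasing_listsD[OF assms tau_t_mono] tauN_tt[of k] assms
  by (auto simp: distinct_card bounded_increasing_lists_def)

lemma lhs_rv_eq:
  "lhs_rv n v N k tt T = (\<Sum>rs\<in>bounded_increasing_lists k tau_t.
     (\<Prod>j<k. pr n v N (rs ! j)) * (\<Prod>r\<in>{1..L} - set rs. 1 - pr n v N r))"
proof -
  have "{rs. length rs = k \<and> sorted_wrt (<) rs \<and> (\<forall>j<k. 1 \<le> rs ! j \<and> enat (rs ! j) \<le> tauN v N (tt (Suc j)))}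
      = bounded_increasing_lists k tau_t"
    unfolding bounded_increasing_lists_def using tauN_tt by (auto simp: Suc_le_eq)
  then show ?thesis unfolding lhs_rv_def tau by simp
qed

lemma sum_block_cN_le: "j \<in> {1..k} \<Longrightarrow> sum (cN v N) {tau_t (j - 1)<..tau_t j} \<le> tt j - tt (j - 1) + m"
proof -
  assume j: "j \<in> {1..k}"
  then have "j - 1 < k" "Suc (j - 1) = j" by auto
  then have "tau_t (j - 1) \<le> tau_t j" using tau_t_mono[of "j - 1"] by simp
  then have "{tau_t (j - 1)<..tau_t j} = {1..tau_t j} - {1..tau_t (j - 1)}" by auto
  then have "sum (cN v N) {tau_t (j - 1)<..tau_t j} = cN_sum v N (tau_t j) - cN_sum v N (tau_t (j - 1))"
    unfolding cN_sum_def using \<open>tau_t (j - 1) \<le> tau_t j\<close> by (simp add: sum_diff)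
  moreover have "cN_sum v N (tau_t j) \<le> tt j + m"
    using cN_sum_tauN_le[of v N "tt j" "tau_t j" m] tauN_tt[of j] cN_le tt_nonneg[of j] m_nonneg j by auto
  moreover have "tt (j - 1) \<le> cN_sum v N (tau_t (j - 1))"
    using le_cN_sum_tauN tauN_tt[of "j - 1"] j by auto
  ultimately show ?thesis by simp
qed


lemma sum_prod_cN_le: "(\<Sum>rs\<in>bounded_increasing_lists k tau_t. \<Prod>j<k. cN v N (rs ! j)) \<le> path_sum k tt m"
proof -
  interpret blocks: block_partition k tau_t by (rule block_partition.intro[OF tau_t_0 tau_t_mono])
  have "(\<Sum>rs\<in>bounded_increasing_lists k tau_t. \<Prod>j<k. cN v N (rs ! j))
      \<le> (\<Sum>ii\<in>index_paths k. \<Prod>j=1..k.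
            (sum (cN v N) (blocks.block j)) ^ (ii j - ii (j - 1)) / fact (ii j - ii (j - 1)))"
    by (rule blocks.sum_bounded_increasing_lists_le[OF cN_nonneg])
  also have "\<dots> \<le> path_sum k tt m"
    unfolding path_sum_def blocks.block_def using sum_block_cN_le
    by (intro sum_mono prod_mono conjI divide_right_mono power_mono divide_nonneg_nonneg zero_le_power
          sum_nonneg cN_nonneg) auto
  finally show ?thesis .
qed

lemma prod_pr_le:
  assumes "rs \<in> bounded_increasing_lists k tau_t"
  shows "0 \<le> (\<Prod>j<k. pr n v N (rs ! j))" "(\<Prod>j<k. pr n v N (rs ! j)) \<le> alpha n ^ k * (\<Prod>j<k. cN v N (rs ! j))"
proof -
  have bound: "0 \<le> pr n v N (rs ! j) \<and> pr n v N (rs ! j) \<le> alpha n * cN v N (rs ! j)" if "j < k" for j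
    using bounded_increasing_lists_tau_t(3)[OF assms that] total N pr_nonneg pr_le_alpha_cN by auto
  then show "0 \<le> (\<Prod>j<k. pr n v N (rs ! j))" by (intro prod_nonneg) auto
  have "(\<Prod>j<k. pr n v N (rs ! j)) \<le> (\<Prod>j<k. alpha n * cN v N (rs ! j))"
    using bound by (intro prod_mono) auto
  then show "(\<Prod>j<k. pr n v N (rs ! j)) \<le> alpha n ^ k * (\<Prod>j<k. cN v N (rs ! j))"
    by (simp add: prod.distrib)
qed

lemma survival_bounds:
  "0 \<le> (\<Prod>r\<in>{1..L} - A. 1 - pr n v N r)" "(\<Prod>r\<in>{1..L} - A. 1 - pr n v N r) \<le> 1"
  using total N pr_nonneg pr_le_1 by (auto intro!: prod_nonneg prod_le_1)

lemma lhs_rv_le_sum: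
  assumes "0 \<le> E" "\<And>rs. rs \<in> bounded_increasing_lists k tau_t \<Longrightarrow> (\<Prod>r\<in>{1..L} - set rs. 1 - pr n v N r) \<le> E"
  shows "lhs_rv n v N k tt T \<le> alpha n ^ k * E * path_sum k tt m"
proof -
  have "lhs_rv n v N k tt T \<le> (\<Sum>rs\<in>bounded_increasing_lists k tau_t. alpha n ^ k * (\<Prod>j<k. cN v N (rs ! j)) * E)"
    unfolding lhs_rv_eq
  proof (rule sum_mono)
    fix rs
    assume rs: "rs \<in> bounded_increasing_lists k tau_t"
    have "0 \<le> alpha n ^ k * (\<Prod>j<k. cN v N (rs ! j))"
      by (intro mult_nonneg_nonneg zero_le_power alpha_nonneg prod_nonneg cN_nonneg)
    then show "(\<Prod>j<k. pr n v N (rs ! j)) * (\<Prod>r\<in>{1..L} - set rs. 1 - pr n v N r)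
        \<le> alpha n ^ k * (\<Prod>j<k. cN v N (rs ! j)) * E"
      using prod_pr_le[OF rs] assms(2)[OF rs] survival_bounds by (intro mult_mono) auto
  qed
  also have "\<dots> = alpha n ^ k * E * (\<Sum>rs\<in>bounded_increasing_lists k tau_t. \<Prod>j<k. cN v N (rs ! j))"
    by (simp add: sum_distrib_left sum_distrib_right algebra_simps)
  also have "\<dots> \<le> alpha n ^ k * E * path_sum k tt m"
    using sum_prod_cN_le assms(1) by (intro mult_left_mono mult_nonneg_nonneg zero_le_power alpha_nonneg)
  finally show ?thesis .
qed

lemma lhs_rv_le_path_sum: "lhs_rv n v N k tt T \<le> alpha n ^ k * path_sum k tt m"
  using lhs_rv_le_sum[of 1] survival_bounds(2) by simp

lemma lhs_rv_le_exp_path_sum: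
  assumes theta: "(\<Sum>r=1..L. theta3 v N r) \<le> \<eta>"
  shows "lhs_rv n v N k tt T \<le> alpha n ^ k * exp (- alpha n * T)
    * exp (alpha n * real k * m + kappa n * 2 ^ n * (\<eta> + m * (T + m))) * path_sum k tt m"
proof -
  have "(\<Prod>r\<in>{1..L} - set rs. 1 - pr n v N r)
      \<le> exp (- alpha n * T) * exp (alpha n * real k * m + kappa n * 2 ^ n * (\<eta> + m * (T + m)))"
    if rs: "rs \<in> bounded_increasing_lists k tau_t" for rs
  proof (rule prod_one_minus_le_exp)
    show "T \<le> sum (cN v N) {1..L}" "sum (cN v N) {1..L} \<le> T + m"
      using le_cN_sum_tauN[OF tau] cN_sum_tauN_le[OF tau cN_le T_nonneg m_nonneg]
      by (simp_all add: cN_sum_def)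
    show "pr n v N r \<le> 1 \<and> alpha n * cN v N r - kappa n * 2 ^ n * (theta3 v N r + (cN v N r)\<^sup>2) \<le> pr n v N r"
      if "r \<in> {1..L}" for r
      using that total N pr_le_1 alpha_cN_le_pr by auto
    show "0 \<le> cN v N r \<and> cN v N r \<le> m" if "r \<in> {1..L}" for r
      using that cN_le cN_nonneg by auto
    show "0 \<le> kappa n * 2 ^ n" using kappa_nonneg by simp
  qed (use bounded_increasing_lists_tau_t[OF rs] theta m_nonneg in \<open>auto simp: theta3_nonneg alpha_nonneg\<close>)
  from lhs_rv_le_sum[OF _ this] show ?thesis by (simp add: mult.assoc)
qed

end

lemma space_filt [simp]: "space (filt M v N t) = space M"
  unfolding filt_def by (simp add: space_measure_of_conv)

lemma sets_filt:
  "sets (filt M v N t) = sigma_sets (space M) {v s i -` A \<inter> space M | s i A. 1 \<le> s \<and> s \<le> t \<and> 1 \<le> i \<and> i \<le> N}"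
  unfolding filt_def by (rule sets_measure_of) auto

lemma measurable_filt:
  assumes "1 \<le> s" "s \<le> t" "1 \<le> i" "i \<le> N"
  shows "v s i \<in> measurable (filt M v N t) (count_space UNIV)"
proof (rule measurableI)
  fix A :: "nat set"
  have "v s i -` A \<inter> space M \<in> {v s i -` A \<inter> space M | s i A. 1 \<le> s \<and> s \<le> t \<and> 1 \<le> i \<and> i \<le> N}"
    using assms by blast
  then show "v s i -` A \<inter> space (filt M v N t) \<in> sets (filt M v N t)"
    unfolding sets_filt by auto
qed simp

lemma sigma_finite_subalgebra_filt:
  assumes "prob_space M"
    and meas: "\<And>s i. 1 \<le> s \<Longrightarrow> 1 \<le> i \<Longrightarrow> i \<le> N \<Longrightarrow> v s i \<in> measurable M (count_space UNIV)"
  shows "sigma_finite_subalgebra M (filt M v N t)"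
proof -
  have sub: "subalgebra M (filt M v N t)"
    unfolding subalgebra_def sets_filt using meas by (auto intro!: sets.sigma_sets_subset measurable_sets)
  moreover have "finite_measure M" using assms(1) by (simp add: prob_space_def)
  ultimately have "finite_measure (restr_to_subalg M (filt M v N t))"
    by (intro finite_measure_restr_to_subalg)
  with sub show ?thesis
    by (simp add: sigma_finite_subalgebra_def finite_measure.axioms(1))
qed

lemma measurable_cN:
  assumes "\<And>i. 1 \<le> i \<Longrightarrow> i \<le> N \<Longrightarrow> \<nu> r i \<in> measurable F (count_space UNIV)"
  shows "(\<lambda>\<omega>. cN (\<lambda>r i. \<nu> r i \<omega>) N r) \<in> borel_measurable F"
  unfolding cN_def using assms by (auto intro!: borel_measurable_sum measurable_compose_countable')

lemma measurable_theta3: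
  assumes "\<And>i. 1 \<le> i \<Longrightarrow> i \<le> N \<Longrightarrow> \<nu> r i \<in> measurable F (count_space UNIV)"
  shows "(\<lambda>\<omega>. theta3 (\<lambda>r i. \<nu> r i \<omega>) N r) \<in> borel_measurable F"
  unfolding theta3_def using assms by (auto intro!: borel_measurable_sum measurable_compose_countable')

lemma measurable_cN_sum:
  assumes "\<And>r i. 1 \<le> r \<Longrightarrow> r \<le> s \<Longrightarrow> 1 \<le> i \<Longrightarrow> i \<le> N \<Longrightarrow> \<nu> r i \<in> measurable F (count_space UNIV)"
  shows "(\<lambda>\<omega>. cN_sum (\<lambda>r i. \<nu> r i \<omega>) N s) \<in> borel_measurable F"
  unfolding cN_sum_def using assms by (intro borel_measurable_sum measurable_cN) auto

lemma sets_enat_le_tauN: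
  assumes "\<And>r i. 1 \<le> r \<Longrightarrow> r < s \<Longrightarrow> 1 \<le> i \<Longrightarrow> i \<le> N \<Longrightarrow> \<nu> r i \<in> measurable F (count_space UNIV)"
  shows "{\<omega>\<in>space F. enat s \<le> tauN (\<lambda>r i. \<nu> r i \<omega>) N T} \<in> sets F"
proof -
  have "{\<omega>\<in>space F. \<forall>j\<in>{..<s}. cN_sum (\<lambda>r i. \<nu> r i \<omega>) N j < T} \<in> sets F"
  proof (rule sets.sets_Collect_finite_All)
    fix j
    assume "j \<in> {..<s}"
    with assms have "(\<lambda>\<omega>. cN_sum (\<lambda>r i. \<nu> r i \<omega>) N j) \<in> borel_measurable F"
      by (intro measurable_cN_sum) auto
    then show "{\<omega>\<in>space F. cN_sum (\<lambda>r i. \<nu> r i \<omega>) N j < T} \<in> sets F"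
      by (rule borel_measurable_less) simp
  qed simp
  moreover have "{\<omega>\<in>space F. enat s \<le> tauN (\<lambda>r i. \<nu> r i \<omega>) N T}
      = {\<omega>\<in>space F. \<forall>j\<in>{..<s}. cN_sum (\<lambda>r i. \<nu> r i \<omega>) N j < T}"
    unfolding enat_le_tauN_iff by auto
  ultimately show ?thesis by simp
qed

lemma integral_indicator_le_of_cond_exp_le:
  fixes X Y :: "'i \<Rightarrow> 'a \<Rightarrow> real"
  assumes sfs: "sigma_finite_subalgebra M F" and A: "A \<in> sets F" and I: "finite I"
    and X: "\<And>i. i \<in> I \<Longrightarrow> integrable M (X i)" and Y: "\<And>i. i \<in> I \<Longrightarrow> integrable M (Y i)"
    and Y_nonneg: "\<And>i x. i \<in> I \<Longrightarrow> x \<in> space M \<Longrightarrow> 0 \<le> Y i x"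
    and a: "0 \<le> a" and c: "0 \<le> c"
    and le: "AE x in M. a * (\<Sum>i\<in>I. real_cond_exp M F (X i) x) \<le> b * (c * (\<Sum>i\<in>I. real_cond_exp M F (Y i) x))"
  shows "(\<integral>x. indicator A x * (a * (\<Sum>i\<in>I. X i x)) \<partial>M) \<le> \<bar>b\<bar> * (\<integral>x. indicator A x * (c * (\<Sum>i\<in>I. Y i x)) \<partial>M)"
proof -
  interpret sigma_finite_subalgebra M F by (rule sfs)
  have A_M: "A \<in> sets M" using A subalg by (auto simp: subalgebra_def)
  have ind_F: "indicator A \<in> borel_measurable F" using A by simp
  have cond_exp_eq: "(\<integral>x. indicator A x * (d * (\<Sum>i\<in>I. Z i x)) \<partial>M)
      = (\<integral>x. indicator A x * (d * (\<Sum>i\<in>I. real_cond_exp M F (Z i) x)) \<partial>M)"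
    and cond_exp_int: "integrable M (\<lambda>x. indicator A x * (d * (\<Sum>i\<in>I. real_cond_exp M F (Z i) x)))"
    if Z: "\<And>i. i \<in> I \<Longrightarrow> integrable M (Z i)" for Z :: "'i \<Rightarrow> 'a \<Rightarrow> real" and d
  proof -
    have int: "integrable M (\<lambda>x. indicator A x * Z i x)" if "i \<in> I" for i
      using integrable_mult_indicator[OF A_M Z[OF that]] by simp
    note ce = real_cond_exp_intg[OF int ind_F borel_measurable_integrable[OF Z]]
    show "integrable M (\<lambda>x. indicator A x * (d * (\<Sum>i\<in>I. real_cond_exp M F (Z i) x)))"
      using ce(1) by (simp add: sum_distrib_left mult.left_commute)
    show "(\<integral>x. indicator A x * (d * (\<Sum>i\<in>I. Z i x)) \<partial>M)
      = (\<integral>x. indicator A x * (d * (\<Sum>i\<in>I. real_cond_exp M F (Z i) x)) \<partial>M)"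
      using int ce by (simp add: sum_distrib_left mult.left_commute)
  qed
  have "AE x in M. \<forall>i\<in>I. 0 \<le> real_cond_exp M F (Y i) x"
    using I Y Y_nonneg by (auto intro!: AE_finite_allI real_cond_exp_pos borel_measurable_integrable)
  then have "AE x in M. indicator A x * (a * (\<Sum>i\<in>I. real_cond_exp M F (X i) x))
      \<le> \<bar>b\<bar> * (indicator A x * (c * (\<Sum>i\<in>I. real_cond_exp M F (Y i) x)))"
    using le
  proof eventually_elim
    case (elim x)
    have "0 \<le> c * (\<Sum>i\<in>I. real_cond_exp M F (Y i) x)" using elim(1) c by (intro mult_nonneg_nonneg sum_nonneg) auto
    then have "a * (\<Sum>i\<in>I. real_cond_exp M F (X i) x) \<le> \<bar>b\<bar> * (c * (\<Sum>i\<in>I. real_cond_exp M F (Y i) x))"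
      using elim(2) abs_ge_self[of b] by (meson mult_right_mono order_trans)
    then show ?case by (auto simp: indicator_def)
  qed
  then have "(\<integral>x. indicator A x * (a * (\<Sum>i\<in>I. real_cond_exp M F (X i) x)) \<partial>M)
      \<le> (\<integral>x. \<bar>b\<bar> * (indicator A x * (c * (\<Sum>i\<in>I. real_cond_exp M F (Y i) x))) \<partial>M)"
    using cond_exp_int[OF X] cond_exp_int[OF Y] by (intro integral_mono_AE) auto
  then show ?thesis using cond_exp_eq[OF X] cond_exp_eq[OF Y] by simp
qed

definition theta3_upto_tauN :: "(nat \<Rightarrow> nat \<Rightarrow> nat) \<Rightarrow> nat \<Rightarrow> real \<Rightarrow> ennreal" where
  "theta3_upto_tauN v N T = (\<Sum>r. ennreal (if enat (Suc r) \<le> tauN v N T then theta3 v N (Suc r) else 0))"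

lemma theta3_upto_tauN_eq:
  assumes "tauN v N T = enat L"
  shows "theta3_upto_tauN v N T = ennreal (\<Sum>r=1..L. theta3 v N r)"
proof -
  have "theta3_upto_tauN v N T = (\<Sum>r<L. ennreal (if enat (Suc r) \<le> tauN v N T then theta3 v N (Suc r) else 0))"
    unfolding theta3_upto_tauN_def using assms by (intro suminf_finite) auto
  also have "\<dots> = ennreal (\<Sum>r<L. theta3 v N (Suc r))"
    using assms by (simp add: sum_ennreal theta3_nonneg)
  finally show ?thesis by (simp add: sum.atLeast1_atMost_eq)
qed

lemma suminf_cN_upto_tauN_le:
  assumes c: "\<And>r. 1 \<le> r \<Longrightarrow> 0 \<le> cN v N r \<and> cN v N r \<le> 1" and T: "0 \<le> T"
  shows "(\<Sum>r. ennreal (if enat (Suc r) \<le> tauN v N T then cN v N (Suc r) else 0)) \<le> ennreal (T + 1)"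
proof (rule suminf_le_const)
  fix S
  obtain s where s: "enat s \<le> tauN v N T" "{r. r < S \<and> enat (Suc r) \<le> tauN v N T} = {..<s}"
  proof (cases "enat S \<le> tauN v N T")
    case True
    have "enat (Suc r) \<le> tauN v N T" if "r < S" for r
      using that True by (meson Suc_leI enat_ord_simps(1) order_trans)
    then have "{r. r < S \<and> enat (Suc r) \<le> tauN v N T} = {..<S}" by auto
    with True show ?thesis by (rule that)
  next
    case False
    then obtain L where L: "tauN v N T = enat L" "L < S" by (cases "tauN v N T") auto
    then have "{r. r < S \<and> enat (Suc r) \<le> tauN v N T} = {..<L}" by auto
    with L(1) show ?thesis by (intro that) simp_all
  qed
  have "(\<Sum>r<S. ennreal (if enat (Suc r) \<le> tauN v N T then cN v N (Suc r) else 0))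
      = (\<Sum>r<S. if enat (Suc r) \<le> tauN v N T then ennreal (cN v N (Suc r)) else 0)"
    by (intro sum.cong) auto
  also have "\<dots> = (\<Sum>r\<in>{..<S} \<inter> {r. enat (Suc r) \<le> tauN v N T}. ennreal (cN v N (Suc r)))"
    by (simp add: sum.inter_restrict)
  also have "{..<S} \<inter> {r. enat (Suc r) \<le> tauN v N T} = {..<s}"
    using s(2) by auto
  also have "(\<Sum>r<s. ennreal (cN v N (Suc r))) = ennreal (cN_sum v N s)"
  proof -
    have "cN_sum v N s = (\<Sum>r<s. cN v N (Suc r))"
      unfolding cN_sum_def by (simp add: sum.atLeast1_atMost_eq)
    with c show ?thesis by (simp add: sum_ennreal)
  qed
  also have "\<dots> \<le> ennreal (T + 1)"
    using cN_sum_le_of_enat_le_tauN[OF s(1) _ T] c by (intro ennreal_leI) auto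
  finally show "(\<Sum>r<S. ennreal (if enat (Suc r) \<le> tauN v N T then cN v N (Suc r) else 0)) \<le> ennreal (T + 1)" .
qed (rule summableI)

lemma integrable_ff:
  assumes "prob_space M" "f \<in> measurable M (count_space UNIV)" "\<And>\<omega>. \<omega> \<in> space M \<Longrightarrow> f \<omega> \<le> N"
  shows "integrable M (\<lambda>\<omega>. ff (f \<omega>) j)"
proof (rule finite_measure.integrable_const_bound[where B = "real N ^ j"])
  show "finite_measure M" using assms(1) by (rule prob_space.axioms(1))
  have "ff (f \<omega>) j \<le> real N ^ j" if "\<omega> \<in> space M" for \<omega>
    using ff_le_power[of "f \<omega>" j] power_mono[of "real (f \<omega>)" "real N" j] assms(3)[OF that] by simp
  then show "AE \<omega> in M. norm (ff (f \<omega>) j) \<le> real N ^ j"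
    by (intro AE_I2) (simp add: ff_nonneg)
qed (use assms(2) in \<open>simp add: measurable_compose_countable'\<close>)

lemma nn_integral_indicator_theta3_le:
  fixes M :: "'a measure" and \<nu> :: "nat \<Rightarrow> nat \<Rightarrow> 'a \<Rightarrow> nat"
  assumes M: "prob_space M"
    and meas: "\<And>t i. 1 \<le> t \<Longrightarrow> 1 \<le> i \<Longrightarrow> i \<le> N \<Longrightarrow> \<nu> t i \<in> measurable M (count_space UNIV)"
    and total: "\<And>t \<omega>. 1 \<le> t \<Longrightarrow> \<omega> \<in> space M \<Longrightarrow> (\<Sum>i=1..N. \<nu> t i \<omega>) = N"
    and third: "AE \<omega> in M. (1 / ff N 3) * (\<Sum>i=1..N. real_cond_exp M (filt M \<nu> N (r - 1)) (\<lambda>x. ff (\<nu> r i x) 3) \<omega>)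
        \<le> b * ((1 / ff N 2) * (\<Sum>i=1..N. real_cond_exp M (filt M \<nu> N (r - 1)) (\<lambda>x. ff (\<nu> r i x) 2) \<omega>))"
    and r: "1 \<le> r" and A: "A \<in> sets (filt M \<nu> N (r - 1))"
  shows "(\<integral>\<^sup>+\<omega>. ennreal (indicator A \<omega> * theta3 (\<lambda>r i. \<nu> r i \<omega>) N r) \<partial>M)
    \<le> ennreal \<bar>b\<bar> * (\<integral>\<^sup>+\<omega>. ennreal (indicator A \<omega> * cN (\<lambda>r i. \<nu> r i \<omega>) N r) \<partial>M)"
proof -
  have sfs: "sigma_finite_subalgebra M (filt M \<nu> N (r - 1))"
    by (rule sigma_finite_subalgebra_filt[OF M meas])
  have A_M: "A \<in> sets M"
    using A sfs by (auto simp: sigma_finite_subalgebra_def subalgebra_def)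
  have int: "integrable M (\<lambda>\<omega>. ff (\<nu> r i \<omega>) j)" if "i \<in> {1..N}" for i j
  proof (rule integrable_ff[OF M, where N = N])
    show "\<nu> r i \<in> measurable M (count_space UNIV)" using meas r that by auto
    show "\<nu> r i \<omega> \<le> N" if "\<omega> \<in> space M" for \<omega>
      using le_of_sum_eq[OF total[OF r that]] \<open>i \<in> {1..N}\<close> by simp
  qed
  have le: "(\<integral>\<omega>. indicator A \<omega> * theta3 (\<lambda>r i. \<nu> r i \<omega>) N r \<partial>M)
      \<le> \<bar>b\<bar> * (\<integral>\<omega>. indicator A \<omega> * cN (\<lambda>r i. \<nu> r i \<omega>) N r \<partial>M)"
    unfolding theta3_def cN_def
    by (rule integral_indicator_le_of_cond_exp_le[OF sfs A finite_atLeastAtMost,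
          where X = "\<lambda>i \<omega>. ff (\<nu> r i \<omega>) 3" and Y = "\<lambda>i \<omega>. ff (\<nu> r i \<omega>) 2", OF int int _ _ _ third])
       (auto simp: ff_nonneg)
  have int_ind: "integrable M (\<lambda>\<omega>. indicator A \<omega> * (d * (\<Sum>i=1..N. ff (\<nu> r i \<omega>) j)))" for d j
  proof -
    have "integrable M (\<lambda>\<omega>. d * (\<Sum>i=1..N. ff (\<nu> r i \<omega>) j))"
      using int by (intro integrable_mult_right Bochner_Integration.integrable_sum) auto
    from integrable_mult_indicator[OF A_M this] show ?thesis by simp
  qed
  have int_theta3: "integrable M (\<lambda>\<omega>. indicator A \<omega> * theta3 (\<lambda>r i. \<nu> r i \<omega>) N r)"
    using int_ind[of "1 / ff N 3" 3] unfolding theta3_def .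
  have int_cN: "integrable M (\<lambda>\<omega>. indicator A \<omega> * cN (\<lambda>r i. \<nu> r i \<omega>) N r)"
    using int_ind[of "1 / ff N 2" 2] unfolding cN_def .
  have "(\<integral>\<^sup>+\<omega>. ennreal (indicator A \<omega> * theta3 (\<lambda>r i. \<nu> r i \<omega>) N r) \<partial>M)
      = ennreal (\<integral>\<omega>. indicator A \<omega> * theta3 (\<lambda>r i. \<nu> r i \<omega>) N r \<partial>M)"
    using int_theta3 by (intro nn_integral_eq_integral AE_I2) (auto intro!: mult_nonneg_nonneg theta3_nonneg)
  also have "\<dots> \<le> ennreal \<bar>b\<bar> * ennreal (\<integral>\<omega>. indicator A \<omega> * cN (\<lambda>r i. \<nu> r i \<omega>) N r \<partial>M)"
    using le by (simp add: ennreal_mult'[symmetric] ennreal_leI)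
  also have "ennreal (\<integral>\<omega>. indicator A \<omega> * cN (\<lambda>r i. \<nu> r i \<omega>) N r \<partial>M)
      = (\<integral>\<^sup>+\<omega>. ennreal (indicator A \<omega> * cN (\<lambda>r i. \<nu> r i \<omega>) N r) \<partial>M)"
    using int_cN by (intro nn_integral_eq_integral[symmetric] AE_I2) (auto intro!: mult_nonneg_nonneg cN_nonneg)
  finally show ?thesis .
qed

lemma measurable_theta3_upto_tauN:
  assumes "\<And>t i. 1 \<le> t \<Longrightarrow> 1 \<le> i \<Longrightarrow> i \<le> N \<Longrightarrow> \<nu> t i \<in> measurable M (count_space UNIV)"
  shows "(\<lambda>\<omega>. theta3_upto_tauN (\<lambda>r i. \<nu> r i \<omega>) N T) \<in> borel_measurable M"
  unfolding theta3_upto_tauN_def using assms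
  by (intro borel_measurable_suminf_order measurable_compose[OF _ measurable_ennreal] measurable_If
        measurable_theta3 sets_enat_le_tauN) auto

lemma nn_integral_theta3_upto_tauN_le:
  fixes M :: "'a measure" and \<nu> :: "nat \<Rightarrow> nat \<Rightarrow> 'a \<Rightarrow> nat"
  assumes M: "prob_space M"
    and meas: "\<And>t i. 1 \<le> t \<Longrightarrow> 1 \<le> i \<Longrightarrow> i \<le> N \<Longrightarrow> \<nu> t i \<in> measurable M (count_space UNIV)"
    and total: "\<And>t \<omega>. 1 \<le> t \<Longrightarrow> \<omega> \<in> space M \<Longrightarrow> (\<Sum>i=1..N. \<nu> t i \<omega>) = N"
    and third: "AE \<omega> in M. \<forall>t\<ge>1.
        (1 / ff N 3) * (\<Sum>i=1..N. real_cond_exp M (filt M \<nu> N (t - 1)) (\<lambda>x. ff (\<nu> t i x) 3) \<omega>)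
        \<le> b * ((1 / ff N 2) * (\<Sum>i=1..N. real_cond_exp M (filt M \<nu> N (t - 1)) (\<lambda>x. ff (\<nu> t i x) 2) \<omega>))"
    and N: "2 \<le> N" and T: "0 \<le> T"
  shows "(\<integral>\<^sup>+\<omega>. theta3_upto_tauN (\<lambda>r i. \<nu> r i \<omega>) N T \<partial>M) \<le> ennreal (\<bar>b\<bar> * (T + 1))"
proof -
  interpret prob_space M by (rule M)
  define A where "A r = {\<omega>\<in>space M. enat r \<le> tauN (\<lambda>r i. \<nu> r i \<omega>) N T}" for r
  have A_filt: "A r \<in> sets (filt M \<nu> N (r - 1))" for r
    using sets_enat_le_tauN[of r N \<nu> "filt M \<nu> N (r - 1)" T] by (simp add: A_def measurable_filt)
  have A_M: "A r \<in> sets M" for r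
    unfolding A_def using meas by (intro sets_enat_le_tauN) auto
  have if_eq: "(if enat r \<le> tauN (\<lambda>r i. \<nu> r i \<omega>) N T then x else 0) = indicator (A r) \<omega> * x"
    if "\<omega> \<in> space M" for \<omega> r and x :: real
    using that by (simp add: A_def indicator_def)
  have meas_term: "(\<lambda>\<omega>. ennreal (indicator (A r) \<omega> * f \<omega>)) \<in> borel_measurable M"
    if "f \<in> borel_measurable M" for f r
    using that A_M by measurable
  have third_r: "AE \<omega> in M.
        (1 / ff N 3) * (\<Sum>i=1..N. real_cond_exp M (filt M \<nu> N (Suc r - 1)) (\<lambda>x. ff (\<nu> (Suc r) i x) 3) \<omega>)
        \<le> b * ((1 / ff N 2) * (\<Sum>i=1..N. real_cond_exp M (filt M \<nu> N (Suc r - 1)) (\<lambda>x. ff (\<nu> (Suc r) i x) 2) \<omega>))"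
    for r using third by eventually_elim (drule spec[of _ "Suc r"], simp)
  have "(\<integral>\<^sup>+\<omega>. theta3_upto_tauN (\<lambda>r i. \<nu> r i \<omega>) N T \<partial>M)
      = (\<Sum>r. \<integral>\<^sup>+\<omega>. ennreal (indicator (A (Suc r)) \<omega> * theta3 (\<lambda>r i. \<nu> r i \<omega>) N (Suc r)) \<partial>M)"
    using meas unfolding theta3_upto_tauN_def
    by (simp add: if_eq nn_integral_suminf[symmetric] meas_term measurable_theta3 cong: nn_integral_cong)
  also have "\<dots> \<le> (\<Sum>r. ennreal \<bar>b\<bar> * \<integral>\<^sup>+\<omega>. ennreal (indicator (A (Suc r)) \<omega> * cN (\<lambda>r i. \<nu> r i \<omega>) N (Suc r)) \<partial>M)"
    by (intro suminf_le summableI nn_integral_indicator_theta3_le[OF M meas total third_r] A_filt) auto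
  also have "\<dots> = ennreal \<bar>b\<bar> * (\<integral>\<^sup>+\<omega>. (\<Sum>r. ennreal (if enat (Suc r) \<le> tauN (\<lambda>r i. \<nu> r i \<omega>) N T
                           then cN (\<lambda>r i. \<nu> r i \<omega>) N (Suc r) else 0)) \<partial>M)"
    using meas by (simp add: if_eq nn_integral_suminf[symmetric] meas_term measurable_cN cong: nn_integral_cong)
  also have "\<dots> \<le> ennreal \<bar>b\<bar> * (\<integral>\<^sup>+\<omega>. ennreal (T + 1) \<partial>M)"
    using total N T cN_nonneg cN_le_1
    by (intro mult_left_mono nn_integral_mono suminf_cN_upto_tauN_le) auto
  finally show ?thesis
    using T by (simp add: emeasure_space_1 ennreal_mult)
qed

lemma measure_gt_le_nn_integral:
  fixes f :: "'a \<Rightarrow> ennreal"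
  assumes f: "f \<in> borel_measurable M" and int: "(\<integral>\<^sup>+x. f x \<partial>M) \<le> ennreal B"
    and B: "0 \<le> B" and \<eta>: "0 < \<eta>"
  shows "measure M {x\<in>space M. ennreal \<eta> < f x} \<le> B / \<eta>"
proof -
  have "{x\<in>space M. ennreal \<eta> < f x} \<subseteq> {x\<in>space M. 1 \<le> ennreal (1 / \<eta>) * f x}"
  proof safe
    fix x
    assume "ennreal \<eta> < f x"
    then have "ennreal (1 / \<eta>) * ennreal \<eta> \<le> ennreal (1 / \<eta>) * f x" by (intro mult_left_mono) auto
    with \<eta> show "1 \<le> ennreal (1 / \<eta>) * f x" by (simp add: ennreal_mult'[symmetric])
  qed
  then have "emeasure M {x\<in>space M. ennreal \<eta> < f x} \<le> emeasure M {x\<in>space M. 1 \<le> ennreal (1 / \<eta>) * f x}"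
    using f by (intro emeasure_mono) measurable
  also have "\<dots> \<le> ennreal (1 / \<eta>) * (\<integral>\<^sup>+x. f x * indicator (space M) x \<partial>M)"
    using f by (intro nn_integral_Markov_inequality) auto
  also have "(\<integral>\<^sup>+x. f x * indicator (space M) x \<partial>M) = (\<integral>\<^sup>+x. f x \<partial>M)"
    by (intro nn_integral_cong) simp
  also have "ennreal (1 / \<eta>) * (\<integral>\<^sup>+x. f x \<partial>M) \<le> ennreal (1 / \<eta>) * ennreal B"
    using int by (intro mult_left_mono) auto
  also have "\<dots> = ennreal (B / \<eta>)"
    using B \<eta> by (simp add: ennreal_mult'[symmetric])
  finally show ?thesis
    unfolding measure_def using B \<eta> by (intro enn2real_leI) auto
qed

lemma integral_le_of_AE_le_indicator:
  assumes M: "prob_space M" and Bad: "Bad \<in> sets M"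
    and le: "AE x in M. f x \<le> a + c * indicator Bad x" and a: "0 \<le> a" and c: "0 \<le> c"
  shows "(\<integral>x. f x \<partial>M) \<le> a + c * measure M Bad"
proof (cases "integrable M f")
  case True
  interpret prob_space M by (rule M)
  have int_ind: "integrable M (\<lambda>x. c * indicator Bad x)"
    using Bad by (intro integrable_mult_right integrable_real_indicator) (auto simp: emeasure_eq_measure)
  then have int: "integrable M (\<lambda>x. a + c * indicator Bad x)" by simp
  have "(\<integral>x. f x \<partial>M) \<le> (\<integral>x. a + c * indicator Bad x \<partial>M)"
    using True int le by (rule integral_mono_AE)
  also have "\<dots> = a + c * measure M Bad"
    using Bad by (simp add: Bochner_Integration.integral_add[OF integrable_const int_ind] prob_space)
  finally show ?thesis .
qed (simp add: not_integrable_integral_eq a c)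

lemma lhs_rv_le_path_sum_1:
  assumes total: "\<And>t. 1 \<le> t \<Longrightarrow> sum (v t) {1..N} = N" and N: "2 * n \<le> N" "4 \<le> N"
    and t0: "tt 0 = 0" and tmono: "\<And>j. j < k \<Longrightarrow> tt j \<le> tt (Suc j)" and tT: "tt k \<le> T"
    and tau: "tauN v N T = enat L"
  shows "lhs_rv n v N k tt T \<le> alpha n ^ k * path_sum k tt 1"
proof -
  interpret pathwise_bound n N k L v tt T 1
    using assms cN_le_1 by unfold_locales auto
  show ?thesis by (rule lhs_rv_le_path_sum)
qed

lemma lhs_rv_le_of_theta3_sum_le:
  assumes total: "\<And>t. 1 \<le> t \<Longrightarrow> sum (v t) {1..N} = N" and N: "2 * n \<le> N" "4 \<le> N"
    and t0: "tt 0 = 0" and tmono: "\<And>j. j < k \<Longrightarrow> tt j \<le> tt (Suc j)" and tT: "tt k \<le> T"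
    and tau: "tauN v N T = enat L"
    and theta: "(\<Sum>r=1..L. theta3 v N r) \<le> \<eta>" and \<epsilon>: "0 < \<epsilon>"
  defines "m \<equiv> \<eta> / \<epsilon> + \<epsilon> + 1 / (real N - 1)"
  shows "lhs_rv n v N k tt T \<le> alpha n ^ k * exp (- alpha n * T)
    * exp (alpha n * real k * m + kappa n * 2 ^ n * (\<eta> + m * (T + m))) * path_sum k tt m"
proof -
  have "cN v N r \<le> m" if "r \<in> {1..L}" for r
  proof -
    have "theta3 v N r \<le> \<eta>"
      using that theta member_le_sum[of r "{1..L}" "theta3 v N"] theta3_nonneg by fastforce
    then have "theta3 v N r / \<epsilon> \<le> \<eta> / \<epsilon>" using \<epsilon> by (simp add: divide_right_mono)
    moreover have "sum (v r) {1..N} = N" "3 \<le> N" using that total N by auto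
    ultimately show ?thesis using cN_le_theta3[of v r N \<epsilon>] \<epsilon> unfolding m_def by simp
  qed
  moreover have "0 \<le> m"
    using \<epsilon> theta theta3_nonneg N unfolding m_def
    by (intro add_nonneg_nonneg divide_nonneg_pos) (auto intro: order_trans[OF sum_nonneg])
  ultimately interpret pathwise_bound n N k L v tt T m
    using assms by unfold_locales auto
  show ?thesis by (rule lhs_rv_le_exp_path_sum[OF theta])
qed

lemma lhs_rv_le_by_theta3_upto_tauN:
  assumes total: "\<And>t. 1 \<le> t \<Longrightarrow> sum (v t) {1..N} = N" and N: "2 * n \<le> N" "4 \<le> N"
    and t0: "tt 0 = 0" and tmono: "\<And>j. j < k \<Longrightarrow> tt j \<le> tt (Suc j)" and tT: "tt k \<le> T"
    and tau: "tauN v N T \<noteq> \<infinity>" and \<epsilon>: "0 < \<epsilon>" and \<eta>: "0 < \<eta>"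
  defines "m \<equiv> \<eta> / \<epsilon> + \<epsilon> + 1 / (real N - 1)"
  shows "lhs_rv n v N k tt T \<le> (if theta3_upto_tauN v N T \<le> ennreal \<eta>
    then alpha n ^ k * exp (- alpha n * T)
      * exp (alpha n * real k * m + kappa n * 2 ^ n * (\<eta> + m * (T + m))) * path_sum k tt m
    else alpha n ^ k * path_sum k tt 1)"
proof -
  obtain L where L: "tauN v N T = enat L" using tau by auto
  show ?thesis
  proof (cases "theta3_upto_tauN v N T \<le> ennreal \<eta>")
    case True
    then have "(\<Sum>r=1..L. theta3 v N r) \<le> \<eta>" using theta3_upto_tauN_eq[OF L] \<eta> by simp
    with True show ?thesis
      using lhs_rv_le_of_theta3_sum_le[OF total N t0 tmono tT L _ \<epsilon>] unfolding m_def by simp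
  next
    case False
    with lhs_rv_le_path_sum_1[OF total N t0 tmono tT L] show ?thesis by simp
  qed
qed

text \<open>By Markov's inequality the event \<open>\<Sum>\<^sub>r\<^sub>\<le>\<^sub>\<tau> \<theta>\<^sub>r > \<eta>\<close> has probability \<open>O(b\<^sub>N / \<eta>)\<close>;
  off it the refined pathwise bound applies, on it the crude one.\<close>

lemma integral_lhs_rv_le:
  fixes M :: "'a measure" and \<nu> :: "nat \<Rightarrow> nat \<Rightarrow> 'a \<Rightarrow> nat"
  assumes M: "prob_space M"
    and meas: "\<And>t i. 1 \<le> t \<Longrightarrow> 1 \<le> i \<Longrightarrow> i \<le> N \<Longrightarrow> \<nu> t i \<in> measurable M (count_space UNIV)"
    and total: "\<And>t \<omega>. 1 \<le> t \<Longrightarrow> \<omega> \<in> space M \<Longrightarrow> (\<Sum>i=1..N. \<nu> t i \<omega>) = N"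
    and tau_fin: "AE \<omega> in M. tauN (\<lambda>r i. \<nu> r i \<omega>) N T \<noteq> \<infinity>"
    and third: "AE \<omega> in M. \<forall>t\<ge>1.
        (1 / ff N 3) * (\<Sum>i=1..N. real_cond_exp M (filt M \<nu> N (t - 1)) (\<lambda>x. ff (\<nu> t i x) 3) \<omega>)
        \<le> b * ((1 / ff N 2) * (\<Sum>i=1..N. real_cond_exp M (filt M \<nu> N (t - 1)) (\<lambda>x. ff (\<nu> t i x) 2) \<omega>))"
    and N: "2 * n \<le> N" "4 \<le> N"
    and t0: "tt 0 = 0" and tmono: "\<And>j. j < k \<Longrightarrow> tt j \<le> tt (Suc j)" and tT: "tt k \<le> T"
    and \<epsilon>: "0 < \<epsilon>" and \<eta>: "0 < \<eta>"
  defines "m \<equiv> \<eta> / \<epsilon> + \<epsilon> + 1 / (real N - 1)"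
  shows "(\<integral>\<omega>. lhs_rv n (\<lambda>r i. \<nu> r i \<omega>) N k tt T \<partial>M)
    \<le> alpha n ^ k * exp (- alpha n * T) * exp (alpha n * real k * m + kappa n * 2 ^ n * (\<eta> + m * (T + m)))
        * path_sum k tt m
      + alpha n ^ k * path_sum k tt 1 * (\<bar>b\<bar> * (T + 1) / \<eta>)"
proof -
  define good where "good = alpha n ^ k * exp (- alpha n * T)
    * exp (alpha n * real k * m + kappa n * 2 ^ n * (\<eta> + m * (T + m))) * path_sum k tt m"
  define bad where "bad = alpha n ^ k * path_sum k tt 1"
  define Bad where "Bad = {\<omega>\<in>space M. ennreal \<eta> < theta3_upto_tauN (\<lambda>r i. \<nu> r i \<omega>) N T}"
  have T: "0 \<le> T" using mono_upto[of k tt 0 k, OF tmono] t0 tT by simp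
  have "0 \<le> m" unfolding m_def using \<epsilon> \<eta> N by (intro add_nonneg_nonneg) auto
  then have good: "0 \<le> good" and bad: "0 \<le> bad"
    unfolding good_def bad_def using path_sum_nonneg[of k tt, OF tmono] alpha_nonneg by auto
  have Bad_M: "Bad \<in> sets M"
    unfolding Bad_def using measurable_theta3_upto_tauN[OF meas] by measurable
  have "measure M Bad \<le> \<bar>b\<bar> * (T + 1) / \<eta>"
    unfolding Bad_def using T \<eta> N
    by (intro measure_gt_le_nn_integral measurable_theta3_upto_tauN meas
          nn_integral_theta3_upto_tauN_le[OF M meas total third]) auto
  moreover have "AE \<omega> in M. lhs_rv n (\<lambda>r i. \<nu> r i \<omega>) N k tt T \<le> good + bad * indicator Bad \<omega>"
    using tau_fin
  proof (rule AE_mp, intro AE_I2 impI)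
    fix \<omega>
    assume "\<omega> \<in> space M" "tauN (\<lambda>r i. \<nu> r i \<omega>) N T \<noteq> \<infinity>"
    with total lhs_rv_le_by_theta3_upto_tauN[of "\<lambda>r i. \<nu> r i \<omega>", OF _ N t0 tmono tT _ \<epsilon> \<eta>] good bad
    show "lhs_rv n (\<lambda>r i. \<nu> r i \<omega>) N k tt T \<le> good + bad * indicator Bad \<omega>"
      unfolding good_def bad_def Bad_def m_def by (auto simp: not_le split: if_splits)
  qed
  then have "(\<integral>\<omega>. lhs_rv n (\<lambda>r i. \<nu> r i \<omega>) N k tt T \<partial>M) \<le> good + bad * measure M Bad"
    by (rule integral_le_of_AE_le_indicator[OF M Bad_M _ good bad])
  ultimately show ?thesis
    unfolding good_def[symmetric] bad_def[symmetric] using bad by (smt (verit) mult_left_mono)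
qed

lemma tendsto_inverse_minus_1: "((\<lambda>N::nat. 1 / (real N - 1)) \<longlongrightarrow> 0) sequentially"
proof -
  have "filterlim (\<lambda>N::nat. real N - 1) at_top sequentially"
    by (rule filterlim_tendsto_add_at_top[OF tendsto_const filterlim_real_sequentially, of "- 1", simplified])
  then show ?thesis
    by (intro tendsto_divide_0[OF tendsto_const] filterlim_at_top_imp_at_infinity)
qed

lemma limsup_lhs_rv_le:
  fixes M :: "nat \<Rightarrow> 'a measure" and \<nu> :: "nat \<Rightarrow> nat \<Rightarrow> nat \<Rightarrow> 'a \<Rightarrow> nat"
  assumes prob: "\<And>N. n \<le> N \<Longrightarrow> prob_space (M N)"
    and meas: "\<And>N t i. n \<le> N \<Longrightarrow> 1 \<le> t \<Longrightarrow> 1 \<le> i \<Longrightarrow> i \<le> N \<Longrightarrow>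
                 \<nu> N t i \<in> measurable (M N) (count_space UNIV)"
    and total: "\<And>N t \<omega>. n \<le> N \<Longrightarrow> 1 \<le> t \<Longrightarrow> \<omega> \<in> space (M N) \<Longrightarrow> (\<Sum>i=1..N. \<nu> N t i \<omega>) = N"
    and tau_fin: "eventually (\<lambda>N. \<forall>u\<ge>0. AE \<omega> in M N. tauN (\<lambda>r i. \<nu> N r i \<omega>) N u \<noteq> \<infinity>) sequentially"
    and b_lim: "b \<longlonglongrightarrow> 0"
    and third: "eventually (\<lambda>N. AE \<omega> in M N. \<forall>t\<ge>1.
        (1 / ff N 3) * (\<Sum>i=1..N. real_cond_exp (M N) (filt (M N) (\<nu> N) N (t - 1)) (\<lambda>x. ff (\<nu> N t i x) 3) \<omega>)
        \<le> b N * ((1 / ff N 2) * (\<Sum>i=1..N. real_cond_exp (M N) (filt (M N) (\<nu> N) N (t - 1))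
                                     (\<lambda>x. ff (\<nu> N t i x) 2) \<omega>))) sequentially"
    and t0: "tt 0 = 0" and tmono: "\<And>j. j < k \<Longrightarrow> tt j \<le> tt (Suc j)" and tT: "tt k \<le> T"
    and \<epsilon>: "0 < \<epsilon>"
  shows "limsup (\<lambda>N. ereal (\<integral>\<omega>. lhs_rv n (\<lambda>r i. \<nu> N r i \<omega>) N k tt T \<partial>M N))
    \<le> ereal (alpha n ^ k * exp (- alpha n * T)
        * exp (alpha n * real k * (2 * \<epsilon>) + kappa n * 2 ^ n * (\<epsilon>\<^sup>2 + 2 * \<epsilon> * (T + 2 * \<epsilon>)))
        * path_sum k tt (2 * \<epsilon>))"
proof -
  define m where "m N = \<epsilon>\<^sup>2 / \<epsilon> + \<epsilon> + 1 / (real N - 1)" for N :: nat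
  define G where "G N = alpha n ^ k * exp (- alpha n * T)
      * exp (alpha n * real k * m N + kappa n * 2 ^ n * (\<epsilon>\<^sup>2 + m N * (T + m N))) * path_sum k tt (m N)
    + alpha n ^ k * path_sum k tt 1 * (\<bar>b N\<bar> * (T + 1) / \<epsilon>\<^sup>2)" for N
  have T: "0 \<le> T" using mono_upto[of k tt 0 k, OF tmono] t0 tT by simp
  have "eventually (\<lambda>N. (\<integral>\<omega>. lhs_rv n (\<lambda>r i. \<nu> N r i \<omega>) N k tt T \<partial>M N) \<le> G N) sequentially"
    using tau_fin third eventually_ge_at_top[of "2 * n + 4"]
  proof eventually_elim
    case (elim N)
    then have "n \<le> N" by simp
    with elim T \<epsilon> show ?case unfolding G_def m_def
      by (intro integral_lhs_rv_le[OF prob meas total _ _ _ _ t0 tmono tT]) auto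
  qed
  then have "limsup (\<lambda>N. ereal (\<integral>\<omega>. lhs_rv n (\<lambda>r i. \<nu> N r i \<omega>) N k tt T \<partial>M N)) \<le> limsup (\<lambda>N. ereal (G N))"
    by (intro Limsup_mono) (auto elim: eventually_mono)
  also have "G \<longlonglongrightarrow> alpha n ^ k * exp (- alpha n * T)
      * exp (alpha n * real k * (2 * \<epsilon>) + kappa n * 2 ^ n * (\<epsilon>\<^sup>2 + 2 * \<epsilon> * (T + 2 * \<epsilon>)))
      * path_sum k tt (2 * \<epsilon>) + alpha n ^ k * path_sum k tt 1 * (\<bar>0\<bar> * (T + 1) / \<epsilon>\<^sup>2)"
  proof -
    have "m \<longlonglongrightarrow> 2 * \<epsilon>"
      unfolding m_def using tendsto_add[OF tendsto_const tendsto_inverse_minus_1, of "2 * \<epsilon>"] \<epsilon>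
      by (simp add: power2_eq_square)
    then show ?thesis
      unfolding G_def using \<epsilon> by (intro tendsto_intros tendsto_path_sum b_lim) auto
  qed
  then have "limsup (\<lambda>N. ereal (G N)) = ereal (alpha n ^ k * exp (- alpha n * T)
      * exp (alpha n * real k * (2 * \<epsilon>) + kappa n * 2 ^ n * (\<epsilon>\<^sup>2 + 2 * \<epsilon> * (T + 2 * \<epsilon>)))
      * path_sum k tt (2 * \<epsilon>))"
    by (intro lim_imp_Limsup) (auto intro: tendsto_ereal)
  finally show ?thesis .
qed

theorem lemma8:
  fixes n k :: nat
    and M :: "nat \<Rightarrow> 'a measure"
    and \<nu> :: "nat \<Rightarrow> nat \<Rightarrow> nat \<Rightarrow> 'a \<Rightarrow> nat"
    and b :: "nat \<Rightarrow> real"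
    and tt :: "nat \<Rightarrow> real" and T :: real
  assumes prob: "\<And>N. n \<le> N \<Longrightarrow> prob_space (M N)"
    and meas: "\<And>N t i. n \<le> N \<Longrightarrow> 1 \<le> t \<Longrightarrow> 1 \<le> i \<Longrightarrow> i \<le> N \<Longrightarrow>
                 \<nu> N t i \<in> measurable (M N) (count_space UNIV)"
    and total: "\<And>N t \<omega>. n \<le> N \<Longrightarrow> 1 \<le> t \<Longrightarrow> \<omega> \<in> space (M N) \<Longrightarrow>
                 (\<Sum>i=1..N. \<nu> N t i \<omega>) = N"
    and tau_fin: "eventually (\<lambda>N. \<forall>u\<ge>0. AE \<omega> in M N.
                    tauN (\<lambda>r i. \<nu> N r i \<omega>) N u \<noteq> \<infinity>) sequentially"
    and b_lim: "b \<longlonglongrightarrow> 0"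
    and third: "eventually (\<lambda>N. AE \<omega> in M N. \<forall>t\<ge>1.
        (1 / ff N 3) * (\<Sum>i=1..N. real_cond_exp (M N) (filt (M N) (\<nu> N) N (t - 1))
                                     (\<lambda>x. ff (\<nu> N t i x) 3) \<omega>)
        \<le> b N * ((1 / ff N 2) * (\<Sum>i=1..N. real_cond_exp (M N) (filt (M N) (\<nu> N) N (t - 1))
                                     (\<lambda>x. ff (\<nu> N t i x) 2) \<omega>))) sequentially"
    and t0: "tt 0 = 0"
    and tmono: "\<And>j. j < k \<Longrightarrow> tt j \<le> tt (Suc j)"
    and tT: "tt k \<le> T"
  shows "limsup (\<lambda>N. ereal (\<integral>\<omega>. lhs_rv n (\<lambda>r i. \<nu> N r i \<omega>) N k tt T \<partial>M N))
           \<le> ereal (rhs n k tt T)"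
proof -
  define H where "H \<epsilon> = alpha n ^ k * exp (- alpha n * T)
      * exp (alpha n * real k * (2 * \<epsilon>) + kappa n * 2 ^ n * (\<epsilon>\<^sup>2 + 2 * \<epsilon> * (T + 2 * \<epsilon>)))
      * path_sum k tt (2 * \<epsilon>)" for \<epsilon>
  have lim: "((\<lambda>\<epsilon>. ereal (H \<epsilon>)) \<longlongrightarrow> ereal (H 0)) (at_right 0)"
    unfolding H_def by (intro tendsto_ereal tendsto_intros tendsto_path_sum tendsto_ident_at)
  have "\<forall>\<^sub>F \<epsilon> in at_right 0. limsup (\<lambda>N. ereal (\<integral>\<omega>. lhs_rv n (\<lambda>r i. \<nu> N r i \<omega>) N k tt T \<partial>M N))
      \<le> ereal (H \<epsilon>)"
    using eventually_at_right_less[of "0::real"]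
    by eventually_elim (unfold H_def, rule limsup_lhs_rv_le[OF prob meas total tau_fin b_lim third t0 tmono tT])
  then have "limsup (\<lambda>N. ereal (\<integral>\<omega>. lhs_rv n (\<lambda>r i. \<nu> N r i \<omega>) N k tt T \<partial>M N)) \<le> ereal (H 0)"
    by (rule tendsto_lowerbound[OF lim]) simp
  also have "H 0 = rhs n k tt T"
    unfolding H_def rhs_eq_path_sum by simp
  finally show ?thesis .
qed

end
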